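(* Let $\nu$ be a signature and let $\mathcal A\in\widetilde{\mathrm{Hinge}}_n$ be a nondegenerate element lying over the canonical hinge $\mathcal P_{\alpha_1,\dots,\alpha_k}$. Then $\rho_\nu(\mathcal A)\Xi_\nu=c\,\Xi_\nu$ for some $c\in\mathbb C^*$.
   Context: Let $V=\mathbb C^n$ with basis $e_1,\dots,e_n$. A linear relation is a subspace $P\subset V\oplus V$; $\mathrm{Ker}\,P=\{v: v\oplus0\in P\}$, $\mathrm{Dom}\,P,\mathrm{Im}\,P$ the projections to the first and second summands, $\mathrm{Indef}\,P=\{w:0\oplus w\in P\}$, $\mathrm{rk}\,P=\dim\mathrm{Dom}\,P-\dim\mathrm{Ker}\,P$. If $\dim P=n$, choose bases $f_1,\dots,f_a,g_1,\dots,g_b,h_1,\dots,h_c$ and $F_1,\dots,F_a,G_1,\dots,G_b,H_1,\dots,H_c$ of $V$ with $P$ spanned by $0\oplus F_i$, $g_j\oplus G_j$, $h_k\oplus0$; $\lambda(P)$ maps $f_1\wedge\dots\wedge f_a\wedge g_{i_1}\wedge\dots\wedge g_{i_s}$ to $F_1\wedge\dots\wedge F_a\wedge G_{i_1}\wedge\dots\wedge G_{i_s}$ and kills the other basis monomials (up to scalar); $\lambda^m(P)$ its restriction to $\Lambda^mV$. A hinge is a sequence $\mathcal P=(P_1,\dots,P_k)$ of $n$-dimensional relations with $\mathrm{Ker}\,P_j=\mathrm{Dom}\,P_{j+1}$, $\mathrm{Im}\,P_j=\mathrm{Indef}\,P_{j+1}$, $\mathrm{Dom}\,P_1=V$, $\mathrm{Im}\,P_k=V$,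 $\mathrm{rk}\,P_j>0$. For each $m$ there is a nonzero $\lambda^m(P_j)$, and any two nonzero ones are proportional; $\lambda^m(\mathcal P)$ denotes it (up to scalar). $\mathcal A$ lies over $\mathcal P$ if $\mathcal A=(c_0\lambda^0(\mathcal P),\dots,c_n\lambda^n(\mathcal P))$ with $c_j\in\mathbb C$; it is nondegenerate if all $c_j\ne0$; $\widetilde{\mathrm{Hinge}}_n$ is the set of all such tuples. For positive integers $\alpha_1,\dots,\alpha_k$ with sum $n$, the canonical hinge $\mathcal P_{\alpha_1,\dots,\alpha_k}=(P_1,\dots,P_k)$ has $P_j$ spanned by $0\oplus e_\sigma$ for $\sigma\le\alpha_1+\dots+\alpha_{j-1}$, by $e_t\oplus e_t$ for $\alpha_1+\dots+\alpha_{j-1}<t\le\alpha_1+\dots+\alpha_j$, and by $e_\mu\oplus0$ for $\mu>\alpha_1+\dots+\alpha_j$. A signature is $\nu_1\ge\dots\ge\nu_n\ge0$ (integers), $\nu_{n+1}=0$; $\mathfrak H_\nu=\bigotimes_j(\Lambda^jV)^{\otimes(\nu_j-\nu_{j+1})}$; $\Xi_\nu=\bigotimes_j(e_1\wedge\dots\wedge e_j)^{\otimes(\nu_j-\nu_{j+1})}$; $\mathfrak r_\nu(A_0,\dots,A_n)=\bigotimes_jA_j^{\otimes(\nu_j-\nu_{j+1})}$; $H_\nu$ is the span of $\mathfrak r_\nu(\lambda^0_{\mathrm{cha}}(g),\dots,\lambda^n_{\mathrm{cha}}(g))\Xi_\nu$, $g\in\mathrm{GL}_n(\mathbb C)$,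 where $\lambda^j_{\mathrm{cha}}(g)v_1\wedge\dots\wedge v_j=gv_1\wedge\dots\wedge gv_j$; $H_\nu$ is invariant under $\mathfrak r_\nu(\mathcal A)$ for $\mathcal A\in\widetilde{\mathrm{Hinge}}_n$, and $\rho_\nu(\mathcal A)$ is the restriction of $\mathfrak r_\nu(\mathcal A)$ to $H_\nu$. *)

theory Defs
  imports Complex_Main "HOL-Combinatorics.Permutations"
begin

text \<open>V = C^n: vectors are functions nat \<Rightarrow> complex supported on {1..n};
 e_i is the standard basis vector. V \<oplus> V is encoded as (nat + nat) \<Rightarrow> complex.\<close>

definition Vn :: "nat \<Rightarrow> (nat \<Rightarrow> complex) set" where
  "Vn n = {v. \<forall>i. v i \<noteq> 0 \<longrightarrow> i \<in> {1..n}}"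

definition evec :: "nat \<Rightarrow> nat \<Rightarrow> complex" where
  "evec i = (\<lambda>x. if x = i then 1 else 0)"

definition dsum :: "(nat \<Rightarrow> complex) \<Rightarrow> (nat \<Rightarrow> complex) \<Rightarrow> (nat + nat \<Rightarrow> complex)" where
  "dsum v w = case_sum v w"

definition lspan :: "('a \<Rightarrow> complex) list \<Rightarrow> ('a \<Rightarrow> complex) set" where
  "lspan vs = {u. \<exists>c. u = (\<lambda>x. \<Sum>i<length vs. c i * (vs ! i) x)}"

definition cspan :: "('a \<Rightarrow> complex) set \<Rightarrow> ('a \<Rightarrow> complex) set" where
  "cspan S = {u. \<exists>F c. finite F \<and> F \<subseteq> S \<and> u = (\<lambda>x. \<Sum>w\<in>F. c w * w x)}"

definition lin_indep :: "('a \<Rightarrow> complex) list \<Rightarrow> bool" where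
  "lin_indep vs \<longleftrightarrow> (\<forall>c. (\<forall>x. (\<Sum>i<length vs. c i * (vs ! i) x) = 0) \<longrightarrow> (\<forall>i<length vs. c i = 0))"

definition is_basis :: "nat \<Rightarrow> (nat \<Rightarrow> complex) list \<Rightarrow> bool" where
  "is_basis n vs \<longleftrightarrow> length vs = n \<and> set vs \<subseteq> Vn n \<and> lin_indep vs"

text \<open>Exterior powers: Lambda^m V has basis e_I = e_{i_1} \<and> ... \<and> e_{i_m}, I an m-subset of {1..n}
  (i_1 < ... < i_m). An element is a coefficient function nat set \<Rightarrow> complex supported on msub n m.
  An operator on Lambda^m V is a matrix L J I (coefficient of e_J in the image of e_I).\<close>

definition msub :: "nat \<Rightarrow> nat \<Rightarrow> nat set set" where
  "msub n m = {I. I \<subseteq> {1..n} \<and> card I = m}"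

text \<open>coordinates of v_1 \<and> ... \<and> v_m in the basis e_J\<close>
definition wedge :: "(nat \<Rightarrow> complex) list \<Rightarrow> nat set \<Rightarrow> complex" where
  "wedge vs J = (if finite J \<and> card J = length vs then
      (\<Sum>p | p permutes {..<length vs}. of_int (sign p) *
          (\<Prod>k<length vs. (vs ! k) (sorted_list_of_set J ! p k)))
    else 0)"

definition mat_apply :: "nat \<Rightarrow> nat \<Rightarrow> (nat set \<Rightarrow> nat set \<Rightarrow> complex) \<Rightarrow> (nat set \<Rightarrow> complex) \<Rightarrow> (nat set \<Rightarrow> complex)" where
  "mat_apply n m L w = (\<lambda>J. \<Sum>I\<in>msub n m. L J I * w I)"

definition is_op :: "nat \<Rightarrow> nat \<Rightarrow> (nat set \<Rightarrow> nat set \<Rightarrow> complex) \<Rightarrow> bool" where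
  "is_op n m L \<longleftrightarrow> (\<forall>J I. L J I \<noteq> 0 \<longrightarrow> J \<in> msub n m \<and> I \<in> msub n m)"

text \<open>lam_rep n P m L: L is (a representative, for one choice of adapted bases, of) lambda^m(P).
  P is spanned by 0\<oplus>F_i, g_j\<oplus>G_j, h_k\<oplus>0, where f@g@h and F@G@H are bases of V;
  lambda(P) sends f_1\<and>..\<and>f_a\<and>g_{i_1}\<and>..\<and>g_{i_s} to F_1\<and>..\<and>F_a\<and>G_{i_1}\<and>..\<and>G_{i_s}
  and kills all other basis monomials.\<close>
definition lam_rep :: "nat \<Rightarrow> (nat + nat \<Rightarrow> complex) set \<Rightarrow> nat \<Rightarrow> (nat set \<Rightarrow> nat set \<Rightarrow> complex) \<Rightarrow> bool" where
  "lam_rep n P m L \<longleftrightarrow>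
    (\<exists>fs gs hs Fs Gs Hs.
       is_basis n (fs @ gs @ hs) \<and> is_basis n (Fs @ Gs @ Hs) \<and>
       length fs = length Fs \<and> length gs = length Gs \<and> length hs = length Hs \<and>
       P = lspan (map (dsum (\<lambda>_. 0)) Fs @ map2 dsum gs Gs @ map (\<lambda>h. dsum h (\<lambda>_. 0)) hs) \<and>
       is_op n m L \<and>
       (\<forall>S. S \<subseteq> {..<n} \<and> card S = m \<longrightarrow>
          mat_apply n m L (wedge (map (\<lambda>i. (fs @ gs @ hs) ! i) (sorted_list_of_set S))) =
            (if {..<length fs} \<subseteq> S \<and> S \<subseteq> {..<length fs + length gs}
             then wedge (map (\<lambda>i. (Fs @ Gs) ! i) (sorted_list_of_set S))
             else (\<lambda>_. 0))))"

definition psum :: "nat list \<Rightarrow> nat \<Rightarrow> nat" where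
  "psum alpha j = sum_list (take j alpha)"

definition cvec :: "nat \<Rightarrow> nat \<Rightarrow> nat \<Rightarrow> (nat + nat \<Rightarrow> complex)" where
  "cvec s0 s1 i = (if i \<le> s0 then dsum (\<lambda>_. 0) (evec i)
                   else if i \<le> s1 then dsum (evec i) (evec i)
                   else dsum (evec i) (\<lambda>_. 0))"

definition canon_hinge :: "nat \<Rightarrow> nat list \<Rightarrow> (nat + nat \<Rightarrow> complex) set list" where
  "canon_hinge n alpha =
     map (\<lambda>j. lspan (map (cvec (psum alpha (j - 1)) (psum alpha j)) [1..<n+1])) [1..<length alpha + 1]"

definition lies_over_nondeg :: "nat \<Rightarrow> (nat \<Rightarrow> nat set \<Rightarrow> nat set \<Rightarrow> complex) \<Rightarrow> (nat + nat \<Rightarrow> complex) set list \<Rightarrow> bool" where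
  "lies_over_nondeg n A Ps \<longleftrightarrow>
     (\<forall>m\<le>n. \<exists>P\<in>set Ps. \<exists>L. lam_rep n P m L \<and> L \<noteq> (\<lambda>_ _. 0) \<and>
        (\<exists>c. c \<noteq> 0 \<and> A m = (\<lambda>J I. c * L J I)))"

text \<open>Signature nu = (nu_1,...,nu_n), nu_{n+1} = 0. The tensor product H_nu is modelled with slots
  (the list of exterior degrees j, each repeated nu_j - nu_{j+1} times, j = 1..n);
  a tensor is a coefficient function on index lists.\<close>
definition mult :: "nat \<Rightarrow> (nat \<Rightarrow> nat) \<Rightarrow> nat \<Rightarrow> nat" where
  "mult n nu j = nu j - (if Suc j \<le> n then nu (Suc j) else 0)"

definition slots :: "nat \<Rightarrow> (nat \<Rightarrow> nat) \<Rightarrow> nat list" where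
  "slots n nu = concat (map (\<lambda>j. replicate (mult n nu j) j) [1..<n+1])"

definition tidx :: "nat \<Rightarrow> (nat \<Rightarrow> nat) \<Rightarrow> nat set list set" where
  "tidx n nu = {Is. length Is = length (slots n nu) \<and>
                    (\<forall>i<length (slots n nu). Is ! i \<in> msub n (slots n nu ! i))}"

definition rnu :: "nat \<Rightarrow> (nat \<Rightarrow> nat) \<Rightarrow> (nat \<Rightarrow> nat set \<Rightarrow> nat set \<Rightarrow> complex)
                    \<Rightarrow> (nat set list \<Rightarrow> complex) \<Rightarrow> (nat set list \<Rightarrow> complex)" where
  "rnu n nu A T = (\<lambda>Js. if Js \<in> tidx n nu then
      (\<Sum>Is\<in>tidx n nu. (\<Prod>i<length (slots n nu). A (slots n nu ! i) (Js ! i) (Is ! i)) * T Is)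
    else 0)"

definition Xi :: "nat \<Rightarrow> (nat \<Rightarrow> nat) \<Rightarrow> nat set list \<Rightarrow> complex" where
  "Xi n nu = (\<lambda>Is. if Is = map (\<lambda>j. {1..j}) (slots n nu) then 1 else 0)"

text \<open>GL_n: g r i is the (r,i) entry, supported on {1..n}^2, with an inverse.\<close>
definition gl :: "nat \<Rightarrow> (nat \<Rightarrow> nat \<Rightarrow> complex) \<Rightarrow> bool" where
  "gl n g \<longleftrightarrow> (\<forall>r i. g r i \<noteq> 0 \<longrightarrow> r \<in> {1..n} \<and> i \<in> {1..n}) \<and>
     (\<exists>h. (\<forall>r i. r \<in> {1..n} \<longrightarrow> i \<in> {1..n} \<longrightarrow> (\<Sum>l=1..n. g r l * h l i) = (if r = i then 1 else 0)) \<and>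
          (\<forall>r i. r \<in> {1..n} \<longrightarrow> i \<in> {1..n} \<longrightarrow> (\<Sum>l=1..n. h r l * g l i) = (if r = i then 1 else 0)))"

definition cha :: "nat \<Rightarrow> (nat \<Rightarrow> nat \<Rightarrow> complex) \<Rightarrow> nat \<Rightarrow> nat set \<Rightarrow> nat set \<Rightarrow> complex" where
  "cha n g m = (\<lambda>J I. if J \<in> msub n m \<and> I \<in> msub n m
       then wedge (map (\<lambda>i. \<lambda>r. g r i) (sorted_list_of_set I)) J else 0)"

definition Hnu :: "nat \<Rightarrow> (nat \<Rightarrow> nat) \<Rightarrow> (nat set list \<Rightarrow> complex) set" where
  "Hnu n nu = cspan {rnu n nu (cha n g) (Xi n nu) | g. gl n g}"

definition rho :: "nat \<Rightarrow> (nat \<Rightarrow> nat) \<Rightarrow> (nat \<Rightarrow> nat set \<Rightarrow> nat set \<Rightarrow> complex)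
                    \<Rightarrow> (nat set list \<Rightarrow> complex) \<Rightarrow> (nat set list \<Rightarrow> complex)" where
  "rho n nu A = (\<lambda>T. if T \<in> Hnu n nu then rnu n nu A T else undefined)"

end

(*
  Let P be the relation of the canonical hinge spanned by 0 + e_i (i <= s0), e_i + e_i
  (s0 < i <= s1) and e_i + 0 (s1 < i), with s0 = alpha_1 + ... + alpha_(j-1) and
  s1 = alpha_1 + ... + alpha_j. Since Xi_nu is a tensor product of initial monomials
  e_1 ^ ... ^ e_m, it suffices that every nonzero representative L of lambda^m(P), for
  arbitrary adapted bases f, g, h and F, G, H, maps e_1 ^ ... ^ e_m to a nonzero multiple of
  itself.

  Adaptedness forces span F = span {e_1, ..., e_s0} and span h = span {e_(s1+1), ..., e_n};
  hence |f| = s0, |f| + |g| = s1, and L <> 0 forces s0 <= m <= s1. Expand e_1, ..., e_m in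
  the basis f, g, h, using for e_k with k > s0 coordinates without f-part whose g-part
  also expresses e_k in F, G (possible as e_k + e_k lies in P). Replacing f_i, g_i by F_i, G_i
  and h_i by 0, and dropping the G-coordinates of the first s0 vectors, gives a second family
  of vectors. L of the wedge of the first family and the wedge of the second are both
  multilinear in the coordinate rows and agree on unit rows by the definition of lambda(P),
  so they agree. The second family is block unitriangular with respect to e_1, ..., e_m, and
  its first block is a basis of span {e_1, ..., e_s0}, so its wedge is a nonzero multiple of
  e_1 ^ ... ^ e_m.
*)

theory Submission
  imports Defs "Jordan_Normal_Form.Determinant" "HOL-Library.Function_Algebras"
begin

section \<open>Wedge products as determinants\<close>

definition wedge_mat :: "(nat \<Rightarrow> complex) list \<Rightarrow> nat set \<Rightarrow> complex mat" where
  "wedge_mat vs J = mat (length vs) (length vs) (\<lambda>(k, l). (vs ! k) (sorted_list_of_set J ! l))"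

lemma wedge_eq_det:
  assumes "finite J" "card J = length vs"
  shows "wedge vs J = det (wedge_mat vs J)"
proof -
  let ?m = "length vs"
  have "det (wedge_mat vs J) =
      (\<Sum>p | p permutes {0..<?m}. of_int (sign p) * (\<Prod>k = 0..<?m. wedge_mat vs J $$ (k, p k)))"
    by (rule det_def') (simp add: wedge_mat_def)
  also have "\<dots> = (\<Sum>p | p permutes {..<?m}. of_int (sign p) *
                      (\<Prod>k<?m. (vs ! k) (sorted_list_of_set J ! p k)))"
    by (intro sum.cong prod.cong arg_cong[where f="\<lambda>x. _ * x"])
       (auto simp: lessThan_atLeast0 wedge_mat_def permutes_in_image)
  finally show ?thesis
    using assms by (simp add: wedge_def)
qed

(* Stated with Suc 0, the simp normal form of {1..m}. *)
lemma sorted_list_of_set_atLeastAtMost_nth: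
  "l < m \<Longrightarrow> sorted_list_of_set {Suc 0..m} ! l = Suc l"
  by (simp add: atLeastLessThanSuc_atLeastAtMost[symmetric] del: upt_Suc)

lemma wedge_permute:
  assumes p: "p permutes {..<length vs}"
  shows "wedge (map (\<lambda>k. vs ! p k) [0..<length vs]) J = of_int (sign p) * wedge vs J"
proof (cases "finite J \<and> card J = length vs")
  case True
  let ?m = "length vs"
  have "wedge_mat (map (\<lambda>k. vs ! p k) [0..<?m]) J = mat ?m ?m (\<lambda>(k, l). wedge_mat vs J $$ (p k, l))"
    using permutes_in_image[OF p] by (intro eq_matI) (auto simp: wedge_mat_def)
  moreover have "det (mat ?m ?m (\<lambda>(k, l). wedge_mat vs J $$ (p k, l))) = of_int (sign p) * det (wedge_mat vs J)"
    by (rule det_permute_rows) (use p in \<open>simp_all add: wedge_mat_def lessThan_atLeast0\<close>)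
  ultimately show ?thesis
    using True by (simp add: wedge_eq_det)
qed (auto simp: wedge_def)

lemma wedge_eq_0_if_repeated:
  assumes "k < length vs" "k' < length vs" "k \<noteq> k'" "vs ! k = vs ! k'"
  shows "wedge vs J = 0"
proof (cases "finite J \<and> card J = length vs")
  case True
  have "det (wedge_mat vs J) = 0"
    by (rule det_identical_rows[of _ "length vs" k k']) (use assms in \<open>auto simp: wedge_mat_def intro!: eq_vecI\<close>)
  then show ?thesis
    using True by (simp add: wedge_eq_det)
qed (auto simp: wedge_def)

lemma wedge_eq_0_if_zero_vector:
  assumes "k < length vs" "vs ! k = (\<lambda>_. 0)"
  shows "wedge vs J = 0"
  using assms by (auto simp: wedge_def intro!: sum.neutral prod_zero bexI[where x=k])

lemma wedge_eq_0_if_vanishing_at: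
  assumes "j \<in> J" "\<And>v. v \<in> set vs \<Longrightarrow> v j = 0"
  shows "wedge vs J = 0"
proof (cases "finite J \<and> card J = length vs")
  case True
  then obtain l where l: "l < length vs" "sorted_list_of_set J ! l = j"
    using assms(1) by (metis in_set_conv_nth length_sorted_list_of_set set_sorted_list_of_set)
  have vanish: "(\<Prod>k<length vs. (vs ! k) (sorted_list_of_set J ! p k)) = 0" if p: "p permutes {..<length vs}" for p
  proof -
    have "Hilbert_Choice.inv p l < length vs"
      using p l by (metis lessThan_iff permutes_in_image permutes_inv)
    moreover have "(vs ! Hilbert_Choice.inv p l) (sorted_list_of_set J ! p (Hilbert_Choice.inv p l)) = 0"
      using calculation p l assms(2) by (simp add: permutes_inverses(1))
    ultimately show ?thesis
      by (intro prod_zero) auto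
  qed
  show ?thesis
    using True unfolding wedge_def by (simp add: vanish)
qed (auto simp: wedge_def)

lemma wedge_select_eq_0_if_not_inj:
  assumes "\<not> inj_on ii {..<m}"
  shows "wedge (map (\<lambda>k. if P k then vs ! ii k else (\<lambda>_. 0)) [0..<m]) J = 0"
proof -
  obtain k k' where kk: "k < m" "k' < m" "k \<noteq> k'" "ii k = ii k'"
    using assms by (auto simp: inj_on_def)
  show ?thesis
  proof (cases "P k \<and> P k'")
    case True
    then show ?thesis
      using kk by (intro wedge_eq_0_if_repeated[of k _ k']) auto
  next
    case False
    then show ?thesis
      using kk by (auto intro: wedge_eq_0_if_zero_vector[of k] wedge_eq_0_if_zero_vector[of k'])
  qed
qed

lemma wedge_linear_slot:
  assumes k: "k < length vs" and D: "finite D"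
  shows "wedge (vs[k := (\<lambda>x. \<Sum>i\<in>D. c i * u i x)]) J = (\<Sum>i\<in>D. c i * wedge (vs[k := u i]) J)"
proof (cases "finite J \<and> card J = length vs")
  case True
  let ?m = "length vs" and ?t = "sorted_list_of_set J"
  define R where "R p = (\<Prod>k'\<in>{..<?m}-{k}. (vs ! k') (?t ! p k'))" for p
  have split: "(\<Prod>k'<?m. (vs[k := w] ! k') (?t ! p k')) = w (?t ! p k) * R p" for w p
  proof -
    have "(\<Prod>k'<?m. (vs[k := w] ! k') (?t ! p k')) =
        (vs[k := w] ! k) (?t ! p k) * (\<Prod>k'\<in>{..<?m}-{k}. (vs[k := w] ! k') (?t ! p k'))"
      using k by (subst prod.remove[of _ k]) auto
    also have "(\<Prod>k'\<in>{..<?m}-{k}. (vs[k := w] ! k') (?t ! p k')) = R p"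
      unfolding R_def by (rule prod.cong) auto
    finally show ?thesis
      using k by simp
  qed
  have "wedge (vs[k := (\<lambda>x. \<Sum>i\<in>D. c i * u i x)]) J =
      (\<Sum>p | p permutes {..<?m}. \<Sum>i\<in>D. c i * (of_int (sign p) * (u i (?t ! p k) * R p)))"
    using True by (simp add: wedge_def split sum_distrib_left sum_distrib_right mult_ac)
  also have "\<dots> = (\<Sum>i\<in>D. \<Sum>p | p permutes {..<?m}. c i * (of_int (sign p) * (u i (?t ! p k) * R p)))"
    by (rule sum.swap)
  also have "\<dots> = (\<Sum>i\<in>D. c i * wedge (vs[k := u i]) J)"
    using True by (simp add: wedge_def split sum_distrib_left)
  finally show ?thesis .
qed (auto simp: wedge_def)

lemma wedge_evec:
  assumes "finite I"
  shows "wedge (map evec (sorted_list_of_set I)) J = (if J = I then 1 else 0)"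
proof (cases "finite J \<and> card J = card I")
  case True
  have "wedge_mat (map evec (sorted_list_of_set I)) J = 1\<^sub>m (card I)" if "J = I"
    using that assms by (intro eq_matI) (auto simp: wedge_mat_def evec_def nth_eq_iff_index_eq)
  moreover have "wedge (map evec (sorted_list_of_set I)) J = 0" if "J \<noteq> I"
  proof -
    obtain x where "x \<in> J" "x \<notin> I"
      using True \<open>J \<noteq> I\<close> assms by (metis card_subset_eq subsetI)
    then show ?thesis
      by (intro wedge_eq_0_if_vanishing_at[of x]) (auto simp: evec_def assms)
  qed
  ultimately show ?thesis
    using True assms by (auto simp: wedge_eq_det)
qed (use assms in \<open>auto simp: wedge_def\<close>)

lemma sorted_image_permutation:
  assumes "inj_on i {..<m}"
  obtains p where "p permutes {..<m}" "\<And>k. k < m \<Longrightarrow> i k = sorted_list_of_set (i ` {..<m}) ! p k"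
proof -
  let ?S = "i ` {..<m}" and ?s = "sorted_list_of_set (i ` {..<m})"
  have len: "length ?s = m"
    using assms by (simp add: card_image)
  have nth_bij: "bij_betw ((!) ?s) {..<m} ?S"
    using bij_betw_nth[of ?s "{..<m}" ?S] len by simp
  define q where "q = inv_into {..<m} ((!) ?s)"
  have "bij_betw (q \<circ> i) {..<m} {..<m}"
    unfolding q_def using assms bij_betw_inv_into[OF nth_bij]
    by (intro bij_betw_trans) (auto simp: bij_betw_def)
  then have "(\<lambda>k. if k < m then q (i k) else k) permutes {..<m}"
    by (intro bij_imp_permutes) (auto simp: bij_betw_def inj_on_def)
  moreover have "i k = ?s ! q (i k)" if "k < m" for k
    unfolding q_def using nth_bij that by (simp add: bij_betw_def f_inv_into_f)
  ultimately show ?thesis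
    using that by auto
qed

lemma wedge_reindex_sorted:
  assumes "inj_on i {..<m}"
  obtains p where "p permutes {..<m}"
    "\<And>f J. wedge (map (\<lambda>k. f (i k)) [0..<m]) J =
       of_int (sign p) * wedge (map f (sorted_list_of_set (i ` {..<m}))) J"
proof -
  let ?s = "sorted_list_of_set (i ` {..<m})"
  obtain p where p: "p permutes {..<m}" "\<And>k. k < m \<Longrightarrow> i k = ?s ! p k"
    using sorted_image_permutation[OF assms] by blast
  have len: "length ?s = m"
    using assms by (simp add: card_image)
  have reindex: "map (\<lambda>k. f (i k)) [0..<m] = map (\<lambda>k. map f ?s ! p k) [0..<length (map f ?s)]" for f
  proof (rule map_cong)
    fix k assume "k \<in> set [0..<length (map f ?s)]"
    then have "k < m"
      using len by simp
    then have "p k < m"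
      using p(1) by (metis lessThan_iff permutes_in_image)
    then show "f (i k) = map f ?s ! p k"
      using len p(2)[OF \<open>k < m\<close>] by simp
  qed (use len in simp)
  have "wedge (map (\<lambda>k. f (i k)) [0..<m]) J = of_int (sign p) * wedge (map f ?s) J" for f J
    unfolding reindex using p(1) len by (intro wedge_permute) simp
  then show ?thesis
    using that p(1) by blast
qed

lemma wedge_eq_0_if_not_initial:
  assumes "\<And>v x. v \<in> set vs \<Longrightarrow> v x \<noteq> 0 \<Longrightarrow> x \<in> {1..length vs}" "J \<noteq> {1..length vs}"
  shows "wedge vs J = 0"
proof (cases "finite J \<and> card J = length vs")
  case True
  then have "\<not> J \<subseteq> {1..length vs}"
    using assms(2) card_subset_eq[of "{1..length vs}" J] by auto
  then obtain j where "j \<in> J" "j \<notin> {1..length vs}"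
    by blast
  then show ?thesis
    using assms(1) by (intro wedge_eq_0_if_vanishing_at[of j]) auto
qed (auto simp: wedge_def)

lemma wedge_block_unitriangular:
  assumes am: "a \<le> length vs"
    and low: "\<And>k x. k < a \<Longrightarrow> (vs ! k) x \<noteq> 0 \<Longrightarrow> x \<in> {1..a}"
    and high: "\<And>k x. a \<le> k \<Longrightarrow> k < length vs \<Longrightarrow> x \<noteq> Suc k \<Longrightarrow> (vs ! k) x \<noteq> 0 \<Longrightarrow> x \<in> {1..a}"
    and diag: "\<And>k. a \<le> k \<Longrightarrow> k < length vs \<Longrightarrow> (vs ! k) (Suc k) = 1"
  shows "wedge vs J = (if J = {1..length vs} then wedge (take a vs) {1..a} else 0)"
proof -
  let ?m = "length vs"
  let ?F = "four_block_mat (wedge_mat (take a vs) {1..a}) (0\<^sub>m a (?m - a))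
      (mat (?m - a) a (\<lambda>(k, l). (vs ! (a + k)) (Suc l))) (1\<^sub>m (?m - a))"
  have "wedge_mat vs {1..?m} = ?F"
  proof (rule eq_matI)
    fix k l assume "k < dim_row ?F" "l < dim_col ?F"
    then have kl: "k < ?m" "l < ?m"
      using am by (auto simp: wedge_mat_def)
    have entry: "wedge_mat vs {1..?m} $$ (k, l) = (vs ! k) (Suc l)"
      using kl by (simp add: wedge_mat_def sorted_list_of_set_atLeastAtMost_nth)
    show "wedge_mat vs {1..?m} $$ (k, l) = ?F $$ (k, l)"
    proof (cases "k < a")
      case True
      then have "?F $$ (k, l) = (if l < a then (vs ! k) (Suc l) else 0)"
        using kl am by (simp add: wedge_mat_def sorted_list_of_set_atLeastAtMost_nth)
      then show ?thesis
        using entry low[OF True, of "Suc l"] by (cases "(vs ! k) (Suc l) = 0") auto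
    next
      case False
      then have "?F $$ (k, l) = (if l < a then (vs ! k) (Suc l) else if k = l then 1 else 0)"
        using kl am by (auto simp: wedge_mat_def)
      then show ?thesis
        using entry kl False high[of k "Suc l"] diag[of k] by (cases "(vs ! k) (Suc l) = 0") auto
    qed
  qed (use am in \<open>auto simp: wedge_mat_def\<close>)
  moreover have "det ?F = det (wedge_mat (take a vs) {1..a}) * det (1\<^sub>m (?m - a))"
    by (rule det_four_block_mat_upper_right_zero) (use am in \<open>auto simp: wedge_mat_def\<close>)
  moreover have "x \<in> {1..?m}" if v: "v \<in> set vs" and x: "v x \<noteq> 0" for v x
  proof -
    obtain k where "k < ?m" "v = vs ! k"
      using v by (auto simp: in_set_conv_nth)
    then show ?thesis
      using x am low[of k x] high[of k x] by (cases "k < a"; cases "x = Suc k") auto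
  qed
  ultimately show ?thesis
    using am wedge_eq_0_if_not_initial[of vs J] by (simp add: wedge_eq_det min_def)
qed

lemma wedge_nonzero_if_lin_indep:
  assumes indep: "lin_indep us"
    and supp: "\<And>u x. u \<in> set us \<Longrightarrow> u x \<noteq> 0 \<Longrightarrow> x \<in> {1..length us}"
  shows "wedge us {1..length us} \<noteq> 0"
proof
  let ?a = "length us"
  let ?A = "transpose_mat (wedge_mat us {1..?a})"
  have carrier: "wedge_mat us {1..?a} \<in> carrier_mat ?a ?a"
    by (simp add: wedge_mat_def)
  assume "wedge us {1..?a} = 0"
  then have "det ?A = 0"
    using carrier by (simp add: wedge_eq_det det_transpose)
  then obtain v where v: "v \<in> carrier_vec ?a" "v \<noteq> 0\<^sub>v ?a" "?A *\<^sub>v v = 0\<^sub>v ?a"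
    using det_0_iff_vec_prod_zero[of ?A ?a] carrier by auto
  have "(\<Sum>k<?a. v $ k * (us ! k) x) = 0" for x
  proof (cases "x \<in> {1..?a}")
    case True
    then have "(?A *\<^sub>v v) $ (x - 1) = (\<Sum>k<?a. v $ k * (us ! k) x)"
      using v(1) by (auto simp: wedge_mat_def scalar_prod_def sorted_list_of_set_atLeastAtMost_nth
          lessThan_atLeast0 mult.commute intro!: sum.cong)
    then show ?thesis
      using v(3) True by auto
  next
    case False
    then have "(us ! k) x = 0" if "k < ?a" for k
      using supp[of "us ! k" x] that by auto
    then show ?thesis
      by (auto intro!: sum.neutral)
  qed
  then have "\<forall>k<?a. v $ k = 0"
    using indep by (auto simp: lin_indep_def)
  then show False
    using v(1,2) by (auto intro!: eq_vecI)
qed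

section \<open>Linear algebra of coefficient functions\<close>

lemma sum_apply: "(sum f A) x = (\<Sum>a\<in>A. f a x)"
  by (induction A rule: infinite_finite_induct) auto

interpretation cfun: vector_space "\<lambda>(c::complex) (v::'a \<Rightarrow> complex) x. c * v x"
  by unfold_locales (auto simp: fun_eq_iff algebra_simps)

lemma lspan_subset_span: "lspan vs \<subseteq> cfun.span (set vs)"
proof
  fix u assume "u \<in> lspan vs"
  then obtain c where u: "u = (\<Sum>i<length vs. (\<lambda>x. c i * (vs ! i) x))"
    by (auto simp: lspan_def fun_eq_iff sum_apply)
  show "u \<in> cfun.span (set vs)"
    unfolding u by (intro cfun.span_sum cfun.span_scale cfun.span_base) auto
qed

lemma sum_set_eq_sum_nth:
  "distinct vs \<Longrightarrow> (\<Sum>v\<in>set vs. g v) = (\<Sum>i<length vs. g (vs ! i))"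
  by (subst sum.reindex_bij_betw[symmetric, where h="(!) vs" and S="{..<length vs}"])
     (auto simp: bij_betw_def inj_on_def nth_eq_iff_index_eq in_set_conv_nth)

lemma span_subset_lspan:
  assumes "distinct vs"
  shows "cfun.span (set vs) \<subseteq> lspan vs"
proof
  fix u assume "u \<in> cfun.span (set vs)"
  then obtain f where "u = (\<Sum>v\<in>set vs. (\<lambda>x. f v * v x))"
    by (auto simp: cfun.span_finite)
  then have "u = (\<lambda>x. \<Sum>i<length vs. f (vs ! i) * (vs ! i) x)"
    using assms by (simp add: sum_set_eq_sum_nth fun_eq_iff sum_apply)
  then show "u \<in> lspan vs"
    by (auto simp: lspan_def)
qed

lemma lin_indep_coeff_zero:
  assumes "lin_indep vs" "\<And>x. (\<Sum>i\<in>S. c i * (vs ! i) x) = 0" "S \<subseteq> {..<length vs}" "i \<in> S"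
  shows "c i = 0"
proof -
  define c' where "c' j = (if j \<in> S then c j else 0)" for j
  have "(\<Sum>j<length vs. c' j * (vs ! j) x) = (\<Sum>j\<in>S. c j * (vs ! j) x)" for x
    by (rule sum.mono_neutral_cong_right) (use assms(3) in \<open>auto simp: c'_def\<close>)
  then have "c' i = 0"
    using assms unfolding lin_indep_def by auto
  then show ?thesis
    using assms(4) by (simp add: c'_def)
qed

lemma lin_indep_filtered_coeff_zero:
  assumes "lin_indep vs" "length vs = n" "\<And>x. (\<Sum>k<n. c k * (if P k then (vs ! k) x else 0)) = 0"
    "k < n" "P k"
  shows "c k = 0"
proof (rule lin_indep_coeff_zero[OF assms(1), where S="{k. k < n \<and> P k}"])
  show "(\<Sum>i\<in>{k. k < n \<and> P k}. c i * (vs ! i) x) = 0" for x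
    using assms(3)[of x] by (simp add: sum.inter_filter[symmetric] if_distrib cong: if_cong)
qed (use assms(2,4,5) in auto)

lemma lin_indep_distinct:
  assumes "lin_indep vs"
  shows "distinct vs"
proof (rule ccontr)
  assume "\<not> distinct vs"
  then obtain i j where ij: "i < length vs" "j < length vs" "i \<noteq> j" "vs ! i = vs ! j"
    by (auto simp: distinct_conv_nth)
  define c where "c k = (if k = i then 1 else if k = j then -1 else (0::complex))" for k
  have "(\<Sum>k\<in>{i, j}. c k * (vs ! k) x) = 0" for x
    using ij by (simp add: c_def)
  then have "c i = 0"
    using lin_indep_coeff_zero[OF assms, where S="{i, j}" and c=c and i=i] ij by auto
  then show False
    by (simp add: c_def)
qed

lemma lin_indep_imp_independent:
  assumes "lin_indep vs"
  shows "cfun.independent (set vs)"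
proof (rule cfun.independent_if_scalars_zero)
  fix f and y :: "'a \<Rightarrow> complex"
  assume sum0: "(\<Sum>v\<in>set vs. (\<lambda>x. f v * v x)) = 0" and y: "y \<in> set vs"
  have "(\<Sum>i<length vs. f (vs ! i) * (vs ! i) x) = 0" for x
    using fun_cong[OF sum0, of x] lin_indep_distinct[OF assms] by (simp add: sum_apply sum_set_eq_sum_nth)
  then have "\<forall>i<length vs. f (vs ! i) = 0"
    using assms[unfolded lin_indep_def, rule_format, of "\<lambda>i. f (vs ! i)"] by blast
  then show "f y = 0"
    using y by (auto simp: in_set_conv_nth)
qed simp

lemma lin_indep_length_le:
  assumes "lin_indep us" "set us \<subseteq> lspan vs"
  shows "length us \<le> length vs"
proof -
  have "set us \<subseteq> cfun.span (set vs)"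
    using assms(2) lspan_subset_span by blast
  then have "card (set us) \<le> card (set vs)"
    using cfun.independent_span_bound[of "set vs" "set us"] lin_indep_imp_independent[OF assms(1)] by auto
  then show ?thesis
    using lin_indep_distinct[OF assms(1)] card_length[of vs] by (simp add: distinct_card)
qed

lemma lin_indep_lspan_eq_length:
  assumes "lin_indep us" "set us \<subseteq> lspan vs" "length us = length vs"
  shows "set vs \<subseteq> lspan us"
proof
  fix v assume v: "v \<in> set vs"
  have distinct: "distinct us"
    using assms(1) by (rule lin_indep_distinct)
  show "v \<in> lspan us"
  proof (rule ccontr)
    assume "v \<notin> lspan us"
    then have v_new: "v \<notin> cfun.span (set us)"
      using span_subset_lspan[OF distinct] by blast
    have "cfun.independent (insert v (set us))"
      using cfun.independent_insertI[OF v_new lin_indep_imp_independent[OF assms(1)]] .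
    moreover have "insert v (set us) \<subseteq> cfun.span (set vs)"
      using assms(2) lspan_subset_span v cfun.span_base by blast
    ultimately have "card (insert v (set us)) \<le> card (set vs)"
      using cfun.independent_span_bound[of "set vs"] by auto
    moreover have "v \<notin> set us"
      using v_new cfun.span_base by blast
    then have "card (insert v (set us)) = Suc (length us)"
      using distinct by (simp add: distinct_card)
    ultimately show False
      using card_length[of vs] assms(3) by linarith
  qed
qed

lemma lin_indep_appendD:
  assumes "lin_indep (xs @ ys)"
  shows "lin_indep xs" "lin_indep ys"
proof -
  show "lin_indep xs"
    unfolding lin_indep_def
  proof (intro allI impI)
    fix c i assume "\<forall>x. (\<Sum>i<length xs. c i * (xs ! i) x) = 0" and i: "i < length xs"
    then have "(\<Sum>j<length xs. c j * ((xs @ ys) ! j) x) = 0" for x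
      by (simp add: nth_append)
    then show "c i = 0"
      using lin_indep_coeff_zero[OF assms, where S="{..<length xs}" and c=c and i=i] i by auto
  qed
  show "lin_indep ys"
    unfolding lin_indep_def
  proof (intro allI impI)
    fix c i assume sum0: "\<forall>x. (\<Sum>i<length ys. c i * (ys ! i) x) = 0" and i: "i < length ys"
    let ?S = "{length xs..<length xs + length ys}" and ?d = "\<lambda>j. c (j - length xs)"
    have "(\<Sum>j\<in>?S. ?d j * ((xs @ ys) ! j) x) = (\<Sum>i<length ys. c i * (ys ! i) x)" for x
      by (rule sum.reindex_bij_witness[where i="\<lambda>i. i + length xs" and j="\<lambda>j. j - length xs"])
         (auto simp: nth_append)
    then have "?d (i + length xs) = 0"
      using lin_indep_coeff_zero[OF assms, where S="?S" and c="?d" and i="i + length xs"] sum0 i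
      by (auto simp: subset_iff)
    then show "c i = 0"
      by simp
  qed
qed

lemma lin_indep_map_evec:
  assumes "distinct xs"
  shows "lin_indep (map evec xs)"
  unfolding lin_indep_def
proof (intro allI impI)
  fix c i assume sum0: "\<forall>x. (\<Sum>i<length (map evec xs). c i * (map evec xs ! i) x) = 0"
    and i: "i < length (map evec xs)"
  have "(\<Sum>k<length xs. c k * evec (xs ! k) (xs ! i)) = c i"
    using i assms by (subst sum.remove[of _ i]) (auto simp: evec_def nth_eq_iff_index_eq intro!: sum.neutral)
  then show "c i = 0"
    using sum0 by simp
qed

lemma lspan_evec_if_supported:
  assumes "distinct xs" "\<And>x. v x \<noteq> 0 \<Longrightarrow> x \<in> set xs"
  shows "v \<in> lspan (map evec xs)"
proof -
  have expand: "v x = (\<Sum>i<length xs. v (xs ! i) * evec (xs ! i) x)" for x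
  proof (cases "x \<in> set xs")
    case True
    then obtain k where k: "k < length xs" "xs ! k = x"
      by (auto simp: in_set_conv_nth)
    then show ?thesis
      using assms(1) by (subst sum.remove[of _ k])
        (auto simp: evec_def nth_eq_iff_index_eq split: if_splits intro!: sum.neutral)
  next
    case False
    then have "v x = 0" "\<forall>i<length xs. xs ! i \<noteq> x"
      using assms(2) nth_mem by blast+
    then show ?thesis
      by (auto simp: evec_def intro!: sum.neutral)
  qed
  show ?thesis
    unfolding lspan_def by (auto intro!: exI[of _ "\<lambda>i. v (xs ! i)"] simp: expand[symmetric])
qed

section \<open>The canonical relation\<close>

definition canon_rel :: "nat \<Rightarrow> nat \<Rightarrow> nat \<Rightarrow> (nat + nat \<Rightarrow> complex) set" where
  "canon_rel s0 s1 n = {u.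
     (\<forall>x. x = 0 \<or> n < x \<or> x \<le> s0 \<longrightarrow> u (Inl x) = 0) \<and>
     (\<forall>x. x = 0 \<or> s1 < x \<longrightarrow> u (Inr x) = 0) \<and>
     (\<forall>x. s0 < x \<and> x \<le> s1 \<longrightarrow> u (Inl x) = u (Inr x))}"

lemma sum_indicator_Suc:
  "(\<Sum>i<n. c i * (if P (Suc i) \<and> x = Suc i then 1 else 0)) =
     (if 0 < x \<and> x \<le> n \<and> P x then c (x - 1) else (0::complex))"
proof (cases "0 < x \<and> x \<le> n \<and> P x")
  case True
  then show ?thesis
    by (subst sum.remove[of _ "x - 1"]) (auto split: if_splits intro!: sum.neutral)
qed (auto intro!: sum.neutral)

lemma lspan_cvec:
  assumes "s0 \<le> s1" "s1 \<le> n"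
  shows "lspan (map (cvec s0 s1) [1..<n+1]) = canon_rel s0 s1 n"
proof -
  have Inl: "(\<Sum>i<n. c i * cvec s0 s1 (Suc i) (Inl x)) = (if 0 < x \<and> x \<le> n \<and> s0 < x then c (x - 1) else 0)"
    for c x
    using sum_indicator_Suc[where P="\<lambda>j. s0 < j"]
    by (subst sum.cong[OF refl, where h="\<lambda>i. c i * (if s0 < Suc i \<and> x = Suc i then 1 else 0)"])
       (auto simp: cvec_def dsum_def evec_def)
  have Inr: "(\<Sum>i<n. c i * cvec s0 s1 (Suc i) (Inr x)) = (if 0 < x \<and> x \<le> n \<and> x \<le> s1 then c (x - 1) else 0)"
    for c x
    using sum_indicator_Suc[where P="\<lambda>j. j \<le> s1"] assms
    by (subst sum.cong[OF refl, where h="\<lambda>i. c i * (if Suc i \<le> s1 \<and> x = Suc i then 1 else 0)"])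
       (auto simp: cvec_def dsum_def evec_def)
  have "lspan (map (cvec s0 s1) [1..<n+1]) = {u. \<exists>c. u = (\<lambda>z. \<Sum>i<n. c i * cvec s0 s1 (Suc i) z)}"
    by (simp add: lspan_def nth_map_upt del: upt_Suc)
  also have "\<dots> = canon_rel s0 s1 n"
  proof (intro equalityI subsetI)
    fix u assume "u \<in> {u. \<exists>c. u = (\<lambda>z. \<Sum>i<n. c i * cvec s0 s1 (Suc i) z)}"
    then show "u \<in> canon_rel s0 s1 n"
      using assms by (auto simp: canon_rel_def Inl Inr)
  next
    fix u assume u: "u \<in> canon_rel s0 s1 n"
    define c where "c i = (if Suc i \<le> s1 then u (Inr (Suc i)) else u (Inl (Suc i)))" for i
    have "u z = (\<Sum>i<n. c i * cvec s0 s1 (Suc i) z)" for z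
      using u assms by (cases z; cases "projl z = 0 \<or> projr z = 0")
        (auto simp: Inl Inr canon_rel_def c_def)
    then show "u \<in> {u. \<exists>c. u = (\<lambda>z. \<Sum>i<n. c i * cvec s0 s1 (Suc i) z)}"
      by blast
  qed
  finally show ?thesis .
qed

section \<open>Multilinearity in coordinate rows\<close>

lemma mat_apply_scale: "mat_apply n m L (\<lambda>J. c * w J) = (\<lambda>J. c * mat_apply n m L w J)"
  by (simp add: mat_apply_def fun_eq_iff sum_distrib_left mult_ac)

lemma mat_apply_zero [simp]: "mat_apply n m L (\<lambda>_. 0) = (\<lambda>_. 0)"
  by (simp add: mat_apply_def fun_eq_iff)

lemma mat_apply_wedge_evec:
  assumes "I \<in> msub n m"
  shows "mat_apply n m L (wedge (map evec (sorted_list_of_set I))) J = L J I"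
proof -
  have "finite (msub n m)"
    by (rule finite_subset[of _ "Pow {1..n}"]) (auto simp: msub_def)
  moreover have "finite I"
    using assms by (auto simp: msub_def finite_subset)
  ultimately show ?thesis
    using assms by (simp add: mat_apply_def wedge_evec if_distrib cong: if_cong)
qed

abbreviation unit_row :: "nat \<Rightarrow> nat \<Rightarrow> complex" where
  "unit_row j \<equiv> (\<lambda>i. if i = j then 1 else 0)"

definition multilinear_rows :: "nat \<Rightarrow> ((nat \<Rightarrow> nat \<Rightarrow> complex) \<Rightarrow> complex) \<Rightarrow> bool" where
  "multilinear_rows m F \<longleftrightarrow> (\<forall>C k (D :: nat set) r R. k < m \<longrightarrow> finite D \<longrightarrow>
     F (C(k := (\<lambda>i. \<Sum>j\<in>D. r j * R j i))) = (\<Sum>j\<in>D. r j * F (C(k := R j))))"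

lemma sum_unit_rows:
  assumes "finite D" "\<And>i. i \<notin> D \<Longrightarrow> r i = 0"
  shows "(\<lambda>i. \<Sum>l\<in>D. r l * unit_row l i) = r"
proof -
  have "(\<lambda>i. \<Sum>l\<in>D. r l * unit_row l i) = (\<lambda>i. \<Sum>l\<in>D. if i = l then r l else 0)"
    by (intro ext sum.cong) auto
  also have "\<dots> = r"
    using assms by (auto simp: sum.delta)
  finally show ?thesis .
qed

lemma multilinear_rows_vanish:
  assumes lin: "multilinear_rows m F"
    and fin: "\<And>k. k < m \<Longrightarrow> finite (D k)"
    and unit: "\<And>C. (\<And>k. k < m \<Longrightarrow> \<exists>j\<in>D k. C k = unit_row j) \<Longrightarrow> F C = 0"
    and supp: "\<And>k i. k < m \<Longrightarrow> i \<notin> D k \<Longrightarrow> C k i = 0"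
  shows "F C = 0"
proof -
  have partial: "F C = 0"
    if "j \<le> m" "\<And>k i. k < m \<Longrightarrow> i \<notin> D k \<Longrightarrow> C k i = 0"
      "\<And>k. j \<le> k \<Longrightarrow> k < m \<Longrightarrow> \<exists>l\<in>D k. C k = unit_row l" for j C
    using that
  proof (induction j arbitrary: C)
    case 0
    then show ?case
      using unit by simp
  next
    case (Suc j)
    have j: "j < m"
      using Suc.prems(1) by simp
    have row: "(\<lambda>i. \<Sum>l\<in>D j. C j l * unit_row l i) = C j"
      using fin[OF j] Suc.prems(2)[OF j] by (rule sum_unit_rows)
    have "F C = F (C(j := (\<lambda>i. \<Sum>l\<in>D j. C j l * unit_row l i)))"
      unfolding row by simp
    also have "\<dots> = (\<Sum>l\<in>D j. C j l * F (C(j := unit_row l)))"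
      using lin j fin[OF j] by (simp add: multilinear_rows_def)
    also have "\<dots> = 0"
    proof (intro sum.neutral ballI)
      fix l assume l: "l \<in> D j"
      have "F (C(j := unit_row l)) = 0"
      proof (rule Suc.IH)
        show "(C(j := unit_row l)) k i = 0" if "k < m" "i \<notin> D k" for k i
          using Suc.prems(2)[OF that] l that by auto
        show "\<exists>l'\<in>D k. (C(j := unit_row l)) k = unit_row l'" if "j \<le> k" "k < m" for k
          using Suc.prems(3)[of k] l that by (cases "k = j") auto
      qed (use j in simp)
      then show "C j l * F (C(j := unit_row l)) = 0"
        by simp
    qed
    finally show ?case .
  qed
  show ?thesis
    by (rule partial[of m C]) (use supp in auto)
qed

lemma multilinear_rows_diff:
  "multilinear_rows m f \<Longrightarrow> multilinear_rows m g \<Longrightarrow> multilinear_rows m (\<lambda>C. f C - g C)"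
  by (simp add: multilinear_rows_def right_diff_distrib sum_subtractf)

lemma multilinear_rows_mat_apply:
  assumes "\<And>I. multilinear_rows m (\<lambda>C. w C I)"
  shows "multilinear_rows m (\<lambda>C. mat_apply n m' L (w C) J)"
  using assms unfolding multilinear_rows_def mat_apply_def
  by (simp add: sum_distrib_left mult.left_commute sum.swap[of _ "msub n m'"])

definition coord_rows :: "(nat \<Rightarrow> nat) \<Rightarrow> (nat \<Rightarrow> complex) list \<Rightarrow> nat
    \<Rightarrow> (nat \<Rightarrow> nat \<Rightarrow> complex) \<Rightarrow> (nat \<Rightarrow> complex) list" where
  "coord_rows bound vs m C = map (\<lambda>k x. \<Sum>i<bound k. C k i * (vs ! i) x) [0..<m]"

lemma length_coord_rows [simp]: "length (coord_rows bound vs m C) = m"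
  by (simp add: coord_rows_def)

lemma multilinear_rows_wedge_coord_rows:
  "multilinear_rows m (\<lambda>C. wedge (coord_rows bound vs m C) J)"
  unfolding multilinear_rows_def
proof (intro allI impI)
  fix C R :: "nat \<Rightarrow> nat \<Rightarrow> complex" and k :: nat and r :: "nat \<Rightarrow> complex" and D :: "nat set"
  assume k: "k < m" and D: "finite D"
  let ?u = "\<lambda>j x. \<Sum>i<bound k. R j i * (vs ! i) x"
  have "coord_rows bound vs m (C(k := R')) = (coord_rows bound vs m C)[k := (\<lambda>x. \<Sum>i<bound k. R' i * (vs ! i) x)]"
    for R'
    using k by (intro nth_equalityI) (auto simp: coord_rows_def nth_list_update)
  moreover have "(\<lambda>x. \<Sum>i<bound k. (\<Sum>j\<in>D. r j * R j i) * (vs ! i) x) = (\<lambda>x. \<Sum>j\<in>D. r j * ?u j x)"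
    by (simp add: sum_distrib_left sum_distrib_right mult_ac sum.swap[of _ D])
  ultimately show "wedge (coord_rows bound vs m (C(k := \<lambda>i. \<Sum>j\<in>D. r j * R j i))) J =
      (\<Sum>j\<in>D. r j * wedge (coord_rows bound vs m (C(k := R j))) J)"
    using wedge_linear_slot[of k "coord_rows bound vs m C" D r ?u J] k D by simp
qed

lemma coord_rows_unit:
  assumes "\<And>k. k < m \<Longrightarrow> C k = unit_row (ii k)"
  shows "coord_rows bound vs m C = map (\<lambda>k. if ii k < bound k then vs ! ii k else (\<lambda>_. 0)) [0..<m]"
proof (rule nth_equalityI)
  fix k assume "k < length (coord_rows bound vs m C)"
  then have "k < m"
    by simp
  moreover have "(\<Sum>i<bound k. unit_row (ii k) i * (vs ! i) x) = (\<Sum>i<bound k. if ii k = i then (vs ! i) x else 0)"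
    for x by (intro sum.cong) auto
  ultimately show "coord_rows bound vs m C ! k = map (\<lambda>k. if ii k < bound k then vs ! ii k else (\<lambda>_. 0)) [0..<m] ! k"
    using assms by (auto simp: coord_rows_def)
qed simp

lemma injection_bounds:
  fixes ii :: "nat \<Rightarrow> nat"
  assumes inj: "inj_on ii {..<m}" and "a \<le> m" "a \<le> c"
    and high: "\<And>k. a \<le> k \<Longrightarrow> k < m \<Longrightarrow> a \<le> ii k"
  shows "({..<a} \<subseteq> ii ` {..<m} \<and> ii ` {..<m} \<subseteq> {..<c}) \<longleftrightarrow> (\<forall>k<m. ii k < (if k < a then a else c))"
proof
  have card: "card (ii ` {..<a}) = a"
    using inj \<open>a \<le> m\<close> by (simp add: card_image inj_on_subset)
  assume A: "{..<a} \<subseteq> ii ` {..<m} \<and> ii ` {..<m} \<subseteq> {..<c}"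
  have "{..<a} \<subseteq> ii ` {..<a}"
  proof
    fix j assume j: "j \<in> {..<a}"
    then obtain k where k: "k < m" "ii k = j"
      using A by auto
    then have "k < a"
      using high[of k] j by (cases "a \<le> k") auto
    then show "j \<in> ii ` {..<a}"
      using k by auto
  qed
  then have low: "ii ` {..<a} = {..<a}"
    using card_subset_eq[of "ii ` {..<a}" "{..<a}"] card by auto
  show "\<forall>k<m. ii k < (if k < a then a else c)"
    using A low by auto
next
  have card: "card (ii ` {..<a}) = a"
    using inj \<open>a \<le> m\<close> by (simp add: card_image inj_on_subset)
  assume B: "\<forall>k<m. ii k < (if k < a then a else c)"
  have "ii k < a" if "k < a" for k
    using B[rule_format, of k] that \<open>a \<le> m\<close> by simp
  then have "ii ` {..<a} \<subseteq> {..<a}"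
    by auto
  then have "ii ` {..<a} = {..<a}"
    using card by (intro card_subset_eq) auto
  then have "{..<a} \<subseteq> ii ` {..<m}"
    using \<open>a \<le> m\<close> image_mono[of "{..<a}" "{..<m}" ii] by simp
  moreover have "ii ` {..<m} \<subseteq> {..<c}"
    using B \<open>a \<le> c\<close> by (force split: if_splits)
  ultimately show "{..<a} \<subseteq> ii ` {..<m} \<and> ii ` {..<m} \<subseteq> {..<c}"
    by blast
qed

section \<open>Representatives of lambda of a canonical relation\<close>

locale canon_lambda_rep =
  fixes n s0 s1 m :: nat and L :: "nat set \<Rightarrow> nat set \<Rightarrow> complex"
    and fs gs hs Fs Gs Hs :: "(nat \<Rightarrow> complex) list"
  assumes s0_le_s1: "s0 \<le> s1" and s1_le_n: "s1 \<le> n"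
    and basis_dom: "is_basis n (fs @ gs @ hs)" and basis_im: "is_basis n (Fs @ Gs @ Hs)"
    and length_f: "length fs = length Fs" and length_g: "length gs = length Gs"
    and length_h: "length hs = length Hs"
    and rel_eq: "lspan (map (cvec s0 s1) [1..<n+1]) =
       lspan (map (dsum (\<lambda>_. 0)) Fs @ map2 dsum gs Gs @ map (\<lambda>h. dsum h (\<lambda>_. 0)) hs)"
    and op: "is_op n m L"
    and action: "\<forall>S. S \<subseteq> {..<n} \<and> card S = m \<longrightarrow>
          mat_apply n m L (wedge (map (\<lambda>i. (fs @ gs @ hs) ! i) (sorted_list_of_set S))) =
            (if {..<length fs} \<subseteq> S \<and> S \<subseteq> {..<length fs + length gs}
             then wedge (map (\<lambda>i. (Fs @ Gs) ! i) (sorted_list_of_set S))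
             else (\<lambda>_. 0))"
begin

abbreviation "a \<equiv> length fs"
abbreviation "b \<equiv> length gs"
abbreviation "B \<equiv> fs @ gs @ hs"
abbreviation "B' \<equiv> Fs @ Gs @ Hs"
abbreviation "gens \<equiv> map (dsum (\<lambda>_. 0)) Fs @ map2 dsum gs Gs @ map (\<lambda>h. dsum h (\<lambda>_. 0)) hs"

lemma length_B: "length B = n"
  using basis_dom by (simp add: is_basis_def)

lemma length_B': "length B' = n"
  using basis_im by (simp add: is_basis_def)

lemma lin_indep_B: "lin_indep B"
  using basis_dom by (simp add: is_basis_def)

lemma lin_indep_B': "lin_indep B'"
  using basis_im by (simp add: is_basis_def)

lemma nth_gens:
  "k < n \<Longrightarrow> gens ! k = dsum (if a \<le> k then B ! k else (\<lambda>_. 0)) (if k < a + b then B' ! k else (\<lambda>_. 0))"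
  using length_B length_f length_g length_h by (auto simp: nth_append)

lemma lspan_gens: "lspan gens = canon_rel s0 s1 n"
  using rel_eq lspan_cvec[OF s0_le_s1 s1_le_n] by simp

lemma lspan_gens_coords:
  assumes "u \<in> canon_rel s0 s1 n"
  obtains c where "\<And>x. u (Inl x) = (\<Sum>k<n. c k * (if a \<le> k then (B ! k) x else 0))"
    "\<And>x. u (Inr x) = (\<Sum>k<n. c k * (if k < a + b then (B' ! k) x else 0))"
proof -
  have len: "length gens = n"
    using length_B length_f length_g length_h by simp
  obtain c where u: "u = (\<lambda>z. \<Sum>k<n. c k * (gens ! k) z)"
    using assms len by (auto simp: lspan_gens[symmetric] lspan_def)
  have "(gens ! k) (Inl x) = (if a \<le> k then (B ! k) x else 0)"
    "(gens ! k) (Inr x) = (if k < a + b then (B' ! k) x else 0)" if "k < n" for k x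
    using nth_gens[OF that] by (simp_all add: dsum_def)
  then show ?thesis
    by (intro that[of c]) (auto simp: u intro!: sum.cong)
qed

lemma nth_gens_mem:
  assumes "k < n"
  shows "dsum (if a \<le> k then B ! k else (\<lambda>_. 0)) (if k < a + b then B' ! k else (\<lambda>_. 0)) \<in> canon_rel s0 s1 n"
proof -
  have len: "length gens = n"
    using length_B length_f length_g length_h by simp
  have "(\<Sum>i<length gens. (if i = k then 1 else 0) * (gens ! i) z) = (gens ! k) z" for z
    using assms len by (subst sum.remove[of _ k]) (auto intro!: sum.neutral)
  then have "gens ! k \<in> lspan gens"
    unfolding lspan_def by (intro CollectI exI[of _ "\<lambda>i. if i = k then 1 else 0"]) auto
  then show ?thesis
    using nth_gens[OF assms] lspan_gens by simp
qed

lemma F_support: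
  assumes "k < a" "(B' ! k) x \<noteq> 0"
  shows "x \<in> {1..s0}"
proof -
  have "dsum (\<lambda>_. 0) (B' ! k) \<in> canon_rel s0 s1 n"
    using nth_gens_mem[of k] assms(1) length_B by simp
  then have "x = 0 \<or> s1 < x \<longrightarrow> (B' ! k) x = 0" "s0 < x \<and> x \<le> s1 \<longrightarrow> (B' ! k) x = 0"
    unfolding canon_rel_def dsum_def by auto
  then show ?thesis
    using assms(2) by (cases "x = 0"; cases "s1 < x"; cases "s0 < x") auto
qed

lemma GH_support:
  assumes "a \<le> k" "k < n" "(B ! k) x \<noteq> 0"
  shows "s0 < x \<and> x \<le> n"
proof -
  have "dsum (B ! k) (if k < a + b then B' ! k else (\<lambda>_. 0)) \<in> canon_rel s0 s1 n"
    using nth_gens_mem[of k] assms(1,2) by simp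
  then have "x = 0 \<or> n < x \<or> x \<le> s0 \<longrightarrow> (B ! k) x = 0"
    unfolding canon_rel_def dsum_def by auto
  then show ?thesis
    using assms(3) by auto
qed

lemma H_support:
  assumes "a + b \<le> k" "k < n" "(B ! k) x \<noteq> 0"
  shows "s1 < x"
proof -
  have "dsum (B ! k) (\<lambda>_. 0) \<in> canon_rel s0 s1 n"
    using nth_gens_mem[of k] assms(1,2) by simp
  then have "s0 < x \<and> x \<le> s1 \<longrightarrow> (B ! k) x = 0"
    unfolding canon_rel_def dsum_def by auto
  then show ?thesis
    using assms GH_support[of k x] by auto
qed

lemma evec_low_in_lspan_F:
  assumes "0 < x" "x \<le> s0"
  shows "evec x \<in> lspan Fs"
proof -
  have "dsum (\<lambda>_. 0) (evec x) \<in> canon_rel s0 s1 n"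
    using assms s0_le_s1 s1_le_n by (auto simp: canon_rel_def dsum_def evec_def)
  then obtain c where
    "\<And>y. dsum (\<lambda>_. 0) (evec x) (Inl y) = (\<Sum>k<n. c k * (if a \<le> k then (B ! k) y else 0))"
    "\<And>y. dsum (\<lambda>_. 0) (evec x) (Inr y) = (\<Sum>k<n. c k * (if k < a + b then (B' ! k) y else 0))"
    by (rule lspan_gens_coords) blast
  then have l: "\<And>y. (\<Sum>k<n. c k * (if a \<le> k then (B ! k) y else 0)) = 0"
    and r: "\<And>y. evec x y = (\<Sum>k<n. c k * (if k < a + b then (B' ! k) y else 0))"
    by (simp_all add: dsum_def)
  have "c k = 0" if "a \<le> k" "k < n" for k
    using lin_indep_filtered_coeff_zero[OF lin_indep_B length_B l] that by blast
  then have "evec x y = (\<Sum>k<a. c k * (Fs ! k) y)" for y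
    unfolding r using length_B length_f
    by (subst sum.mono_neutral_right[of "{..<n}" "{..<a}"]) (auto simp: nth_append intro!: sum.cong)
  then show ?thesis
    unfolding lspan_def using length_f by auto
qed

lemma evec_high_in_lspan_H:
  assumes "s1 < x" "x \<le> n"
  shows "evec x \<in> lspan hs"
proof -
  have "dsum (evec x) (\<lambda>_. 0) \<in> canon_rel s0 s1 n"
    using assms s0_le_s1 s1_le_n by (auto simp: canon_rel_def dsum_def evec_def)
  then obtain c where
    "\<And>y. dsum (evec x) (\<lambda>_. 0) (Inl y) = (\<Sum>k<n. c k * (if a \<le> k then (B ! k) y else 0))"
    "\<And>y. dsum (evec x) (\<lambda>_. 0) (Inr y) = (\<Sum>k<n. c k * (if k < a + b then (B' ! k) y else 0))"
    by (rule lspan_gens_coords) blast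
  then have l: "\<And>y. evec x y = (\<Sum>k<n. c k * (if a \<le> k then (B ! k) y else 0))"
    and r: "\<And>y. (\<Sum>k<n. c k * (if k < a + b then (B' ! k) y else 0)) = 0"
    by (simp_all add: dsum_def)
  have "c k = 0" if "k < a + b" for k
    using lin_indep_filtered_coeff_zero[OF lin_indep_B' length_B' r] that length_B by simp
  then have "evec x y = (\<Sum>k\<in>{a+b..<n}. c k * (B ! k) y)" for y
    unfolding l by (subst sum.mono_neutral_right[of "{..<n}" "{a+b..<n}"]) (auto intro!: sum.cong)
  also have "\<dots> y = (\<Sum>j<length hs. c (j + (a + b)) * (hs ! j) y)" for y
    by (rule sum.reindex_bij_witness[where i="\<lambda>j. j + (a + b)" and j="\<lambda>k. k - (a + b)"])
       (use length_B in \<open>auto simp: nth_append\<close>)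
  finally show ?thesis
    unfolding lspan_def by (auto intro!: exI[of _ "\<lambda>j. c (j + (a + b))"])
qed

lemma length_F_eq: "a = s0"
proof -
  have "set Fs \<subseteq> lspan (map evec [1..<s0+1])"
  proof
    fix v assume "v \<in> set Fs"
    then obtain k where k: "k < a" "v = Fs ! k"
      using length_f by (auto simp: in_set_conv_nth)
    then have "x \<in> set [1..<s0+1]" if "v x \<noteq> 0" for x
      using F_support[of k x] that length_f by (auto simp: nth_append)
    then show "v \<in> lspan (map evec [1..<s0+1])"
      by (intro lspan_evec_if_supported) auto
  qed
  then have "length Fs \<le> length (map evec [1..<s0+1])"
    by (rule lin_indep_length_le[OF lin_indep_appendD(1)[OF lin_indep_B']])
  moreover have "length (map evec [1..<s0+1]) \<le> length Fs"
    using evec_low_in_lspan_F by (intro lin_indep_length_le lin_indep_map_evec) auto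
  ultimately show ?thesis
    using length_f by (simp del: upt_Suc)
qed

lemma length_FG_eq: "a + b = s1"
proof -
  have "set hs \<subseteq> lspan (map evec [s1+1..<n+1])"
  proof
    fix v assume "v \<in> set hs"
    then obtain j where j: "j < length hs" "v = hs ! j"
      by (auto simp: in_set_conv_nth)
    then have "x \<in> set [s1+1..<n+1]" if "v x \<noteq> 0" for x
      using H_support[of "j + (a + b)" x] GH_support[of "j + (a + b)" x] that length_B
      by (auto simp: nth_append)
    then show "v \<in> lspan (map evec [s1+1..<n+1])"
      by (intro lspan_evec_if_supported) auto
  qed
  then have "length hs \<le> length (map evec [s1+1..<n+1])"
    using lin_indep_B by (intro lin_indep_length_le[OF lin_indep_appendD(2)[of "fs @ gs" hs]]) simp_all
  moreover have "length (map evec [s1+1..<n+1]) \<le> length hs"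
    using evec_high_in_lspan_H by (intro lin_indep_length_le lin_indep_map_evec) auto
  ultimately show ?thesis
    using length_B s1_le_n by (simp del: upt_Suc)
qed

lemma evec_in_lspan_B:
  assumes "0 < x" "x \<le> n"
  shows "evec x \<in> lspan B"
proof -
  have "set B \<subseteq> lspan (map evec [1..<n+1])"
  proof
    fix v assume "v \<in> set B"
    then have "v \<in> Vn n"
      using basis_dom by (auto simp: is_basis_def)
    then show "v \<in> lspan (map evec [1..<n+1])"
      by (intro lspan_evec_if_supported) (auto simp: Vn_def)
  qed
  then have "set (map evec [1..<n+1]) \<subseteq> lspan B"
    by (rule lin_indep_lspan_eq_length[OF lin_indep_B]) (simp only: length_B length_map length_upt)
  then show ?thesis
    using assms by (auto simp del: upt_Suc)
qed

(* rows_B C are the vectors with coordinates C k in B; rows_B' C puts the same coordinates on B',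
   truncated to the F-part in rows k < a and to the F- and G-part in the remaining rows. *)
abbreviation "rows_B \<equiv> coord_rows (\<lambda>_. n) B m"

definition row_bound :: "nat \<Rightarrow> nat" where
  "row_bound k = (if k < a then a else a + b)"

abbreviation "rows_B' \<equiv> coord_rows row_bound B' m"

definition row_support :: "nat \<Rightarrow> nat set" where
  "row_support k = (if k < a then {..<n} else {a..<n})"

lemma L_wedge_unit_rows:
  assumes "\<And>k. k < m \<Longrightarrow> ii k < n"
  shows "mat_apply n m L (wedge (map (\<lambda>k. B ! ii k) [0..<m])) =
    (if inj_on ii {..<m} \<and> {..<a} \<subseteq> ii ` {..<m} \<and> ii ` {..<m} \<subseteq> {..<a + b}
     then wedge (map (\<lambda>k. B' ! ii k) [0..<m]) else (\<lambda>_. 0))"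
proof (cases "inj_on ii {..<m}")
  case False
  then have "wedge (map (\<lambda>k. B ! ii k) [0..<m]) = (\<lambda>_. 0)"
    using wedge_select_eq_0_if_not_inj[where P="\<lambda>_. True"] by auto
  then show ?thesis
    using False by simp
next
  case True
  let ?S = "ii ` {..<m}"
  obtain p where "p permutes {..<m}" and p: "\<And>f J. wedge (map (\<lambda>k. f (ii k)) [0..<m]) J =
      of_int (sign p) * wedge (map f (sorted_list_of_set ?S)) J"
    by (rule wedge_reindex_sorted[OF True]) blast
  have S: "?S \<subseteq> {..<n}" "card ?S = m"
    using assms card_image[OF True] by auto
  have "wedge (map (\<lambda>k. B ! ii k) [0..<m]) =
      (\<lambda>J. of_int (sign p) * wedge (map ((!) B) (sorted_list_of_set ?S)) J)"
    using p[of "(!) B"] by (simp add: fun_eq_iff)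
  then have "mat_apply n m L (wedge (map (\<lambda>k. B ! ii k) [0..<m])) =
      (\<lambda>J. of_int (sign p) * mat_apply n m L (wedge (map ((!) B) (sorted_list_of_set ?S))) J)"
    by (simp add: mat_apply_scale)
  also have "\<dots> = (if {..<a} \<subseteq> ?S \<and> ?S \<subseteq> {..<a + b}
      then (\<lambda>J. of_int (sign p) * wedge (map ((!) (Fs @ Gs)) (sorted_list_of_set ?S)) J) else (\<lambda>_. 0))"
    using action[rule_format, OF conjI[OF S]] by simp
  finally have L_eq: "mat_apply n m L (wedge (map (\<lambda>k. B ! ii k) [0..<m])) =
    (if {..<a} \<subseteq> ?S \<and> ?S \<subseteq> {..<a + b}
     then (\<lambda>J. of_int (sign p) * wedge (map ((!) (Fs @ Gs)) (sorted_list_of_set ?S)) J) else (\<lambda>_. 0))" .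
  have "(\<lambda>J. of_int (sign p) * wedge (map ((!) (Fs @ Gs)) (sorted_list_of_set ?S)) J) =
      wedge (map (\<lambda>k. B' ! ii k) [0..<m])" if "?S \<subseteq> {..<a + b}"
  proof -
    have eq: "map ((!) (Fs @ Gs)) (sorted_list_of_set ?S) = map ((!) B') (sorted_list_of_set ?S)"
      using that length_f length_g by (auto simp: nth_append)
    show ?thesis
      unfolding eq using p[of "(!) B'"] by (simp add: fun_eq_iff)
  qed
  then show ?thesis
    using True L_eq by simp
qed

lemma rows_B_unit:
  assumes "\<And>k. k < m \<Longrightarrow> C k = unit_row (ii k) \<and> ii k < n"
  shows "rows_B C = map (\<lambda>k. B ! ii k) [0..<m]"
proof -
  have "rows_B C = map (\<lambda>k. if ii k < n then B ! ii k else (\<lambda>_. 0)) [0..<m]"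
    using assms by (intro coord_rows_unit) auto
  also have "\<dots> = map (\<lambda>k. B ! ii k) [0..<m]"
    using assms by (intro map_cong) auto
  finally show ?thesis .
qed

lemma rows_B_exist:
  assumes "length vs = m" "set vs \<subseteq> lspan B"
  obtains C where "rows_B C = vs" "\<And>k i. n \<le> i \<Longrightarrow> C k i = 0"
proof -
  have "vs ! k \<in> lspan B" if "k < m" for k
    using assms that nth_mem by blast
  then have "\<forall>k\<in>{..<m}. \<exists>r. vs ! k = (\<lambda>x. \<Sum>i<n. r i * (B ! i) x)"
    by (simp only: lspan_def length_B mem_Collect_eq lessThan_iff) blast
  then obtain R where R: "\<And>k. k < m \<Longrightarrow> vs ! k = (\<lambda>x. \<Sum>i<n. R k i * (B ! i) x)"
    by (metis bchoice lessThan_iff)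
  show ?thesis
  proof
    show "rows_B (\<lambda>k i. if i < n then R k i else 0) = vs"
      using assms(1) R by (intro nth_equalityI) (auto simp: coord_rows_def)
  qed simp
qed

lemma L_vanishes_out_of_range:
  assumes "\<not> (a \<le> m \<and> m \<le> a + b)"
  shows "L = (\<lambda>_ _. 0)"
proof (intro ext)
  fix J I
  show "L J I = 0"
  proof (cases "I \<in> msub n m")
    case I: True
    have "finite I"
      using I by (auto simp: msub_def finite_subset)
    then have "set (map evec (sorted_list_of_set I)) \<subseteq> lspan B"
      using I by (auto simp: msub_def intro!: evec_in_lspan_B)
    moreover have "length (map evec (sorted_list_of_set I)) = m"
      using I by (simp add: msub_def)
    ultimately obtain C where C: "rows_B C = map evec (sorted_list_of_set I)" "\<And>k i. n \<le> i \<Longrightarrow> C k i = 0"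
      using rows_B_exist by metis
    have "mat_apply n m L (wedge (rows_B C)) J = 0"
    proof (rule multilinear_rows_vanish[where D="\<lambda>_. {..<n}" and F="\<lambda>C. mat_apply n m L (wedge (rows_B C)) J"])
      show "multilinear_rows m (\<lambda>C. mat_apply n m L (wedge (rows_B C)) J)"
        by (intro multilinear_rows_mat_apply multilinear_rows_wedge_coord_rows)
    next
      fix C' assume "\<And>k. k < m \<Longrightarrow> \<exists>j\<in>{..<n}. C' k = unit_row j"
      then obtain ii where ii: "\<And>k. k < m \<Longrightarrow> C' k = unit_row (ii k) \<and> ii k < n"
        by (metis lessThan_iff)
      have "\<not> (inj_on ii {..<m} \<and> {..<a} \<subseteq> ii ` {..<m} \<and> ii ` {..<m} \<subseteq> {..<a + b})"
        using assms card_mono[of "ii ` {..<m}" "{..<a}"] card_mono[of "{..<a + b}" "ii ` {..<m}"]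
        by (auto simp: card_image)
      moreover have "rows_B C' = map (\<lambda>k. B ! ii k) [0..<m]"
        using ii by (rule rows_B_unit)
      ultimately show "mat_apply n m L (wedge (rows_B C')) J = 0"
        using L_wedge_unit_rows[of ii] ii by auto
    qed (use C(2) in auto)
    then show ?thesis
      using mat_apply_wedge_evec[OF I] C(1) by simp
  qed (use op in \<open>auto simp: is_op_def\<close>)
qed

lemma L_wedge_unit_rows_transfer:
  assumes "a \<le> m" and ii: "\<And>k. k < m \<Longrightarrow> ii k \<in> row_support k"
  shows "mat_apply n m L (wedge (map (\<lambda>k. B ! ii k) [0..<m])) J =
    wedge (map (\<lambda>k. if ii k < row_bound k then B' ! ii k else (\<lambda>_. 0)) [0..<m]) J"
proof -
  have ii_n: "ii k < n" and ii_a: "a \<le> k \<Longrightarrow> a \<le> ii k" if "k < m" for k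
    using ii[OF that] by (auto simp: row_support_def split: if_splits)
  show ?thesis
  proof (cases "inj_on ii {..<m}")
    case inj: True
    have "({..<a} \<subseteq> ii ` {..<m} \<and> ii ` {..<m} \<subseteq> {..<a + b}) \<longleftrightarrow> (\<forall>k<m. ii k < row_bound k)"
      using injection_bounds[OF inj \<open>a \<le> m\<close>, of "a + b"] ii_a by (simp add: row_bound_def)
    then have L_eq: "mat_apply n m L (wedge (map (\<lambda>k. B ! ii k) [0..<m])) =
        (if \<forall>k<m. ii k < row_bound k then wedge (map (\<lambda>k. B' ! ii k) [0..<m]) else (\<lambda>_. 0))"
      using L_wedge_unit_rows[of ii] ii_n inj by simp
    show ?thesis
    proof (cases "\<forall>k<m. ii k < row_bound k")
      case True
      then have "map (\<lambda>k. if ii k < row_bound k then B' ! ii k else (\<lambda>_. 0)) [0..<m] = map (\<lambda>k. B' ! ii k) [0..<m]"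
        by (intro map_cong) auto
      then show ?thesis
        using True L_eq by (simp only:) simp
    next
      case False
      then obtain k where "k < m" "\<not> ii k < row_bound k"
        by blast
      then have "wedge (map (\<lambda>k. if ii k < row_bound k then B' ! ii k else (\<lambda>_. 0)) [0..<m]) J = 0"
        by (intro wedge_eq_0_if_zero_vector[of k]) auto
      then show ?thesis
        using False L_eq by auto
    qed
  next
    case False
    then show ?thesis
      using L_wedge_unit_rows[of ii] ii_n wedge_select_eq_0_if_not_inj[OF False] by simp
  qed
qed

lemma L_wedge_rows:
  assumes "a \<le> m" and supp: "\<And>k i. k < m \<Longrightarrow> i \<notin> row_support k \<Longrightarrow> C k i = 0"
  shows "mat_apply n m L (wedge (rows_B C)) J = wedge (rows_B' C) J"
proof -
  have "mat_apply n m L (wedge (rows_B C)) J - wedge (rows_B' C) J = 0"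
  proof (rule multilinear_rows_vanish[where D=row_support and
        F="\<lambda>C. mat_apply n m L (wedge (rows_B C)) J - wedge (rows_B' C) J"])
    show "multilinear_rows m (\<lambda>C. mat_apply n m L (wedge (rows_B C)) J - wedge (rows_B' C) J)"
      by (intro multilinear_rows_diff multilinear_rows_mat_apply multilinear_rows_wedge_coord_rows)
  next
    fix C' assume "\<And>k. k < m \<Longrightarrow> \<exists>j\<in>row_support k. C' k = unit_row j"
    then obtain ii where ii: "\<And>k. k < m \<Longrightarrow> C' k = unit_row (ii k) \<and> ii k \<in> row_support k"
      by metis
    moreover have "ii k < n" if "k < m" for k
      using ii[OF that] by (auto simp: row_support_def split: if_splits)
    ultimately have "rows_B C' = map (\<lambda>k. B ! ii k) [0..<m]"
      by (intro rows_B_unit) blast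
    moreover have "rows_B' C' = map (\<lambda>k. if ii k < row_bound k then B' ! ii k else (\<lambda>_. 0)) [0..<m]"
      using ii by (intro coord_rows_unit) auto
    ultimately show "mat_apply n m L (wedge (rows_B C')) J - wedge (rows_B' C') J = 0"
      using L_wedge_unit_rows_transfer[OF \<open>a \<le> m\<close>, of ii J] ii by simp
  qed (use supp in \<open>auto simp: row_support_def\<close>)
  then show ?thesis
    by simp
qed

lemma nth_rows_B': "k < m \<Longrightarrow> rows_B' C ! k = (\<lambda>x. \<Sum>i<row_bound k. C k i * (B' ! i) x)"
  by (simp add: coord_rows_def)

lemma rows_B'_low_support:
  assumes "k < a" "k < m" "(rows_B' C ! k) x \<noteq> 0"
  shows "x \<in> {1..a}"
proof -
  have "(\<Sum>i<a. C k i * (B' ! i) x) \<noteq> 0"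
    using assms by (simp add: nth_rows_B' row_bound_def)
  then obtain i where "i < a" "C k i * (B' ! i) x \<noteq> 0"
    by (meson lessThan_iff sum.neutral)
  then show ?thesis
    using F_support[of i x] length_F_eq by auto
qed

lemma low_row_coords:
  assumes "k < a"
  obtains r where "\<And>i. n \<le> i \<Longrightarrow> r i = 0" "(\<lambda>x. \<Sum>i<n. r i * (B ! i) x) = evec (Suc k)"
proof -
  have "evec (Suc k) \<in> lspan B"
    using assms length_F_eq s0_le_s1 s1_le_n by (intro evec_in_lspan_B) auto
  then obtain r where "evec (Suc k) = (\<lambda>x. \<Sum>i<n. r i * (B ! i) x)"
    unfolding lspan_def length_B by blast
  then show ?thesis
    by (intro that[of "\<lambda>i. if i < n then r i else 0"]) (auto intro!: ext sum.cong)
qed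

lemma mid_row_coords:
  assumes "a \<le> k" "Suc k \<le> a + b"
  obtains r where "\<And>i. i \<notin> {a..<n} \<Longrightarrow> r i = 0" "(\<lambda>x. \<Sum>i<n. r i * (B ! i) x) = evec (Suc k)"
    "\<And>x. x \<notin> {1..a} \<Longrightarrow> (\<Sum>i<a + b. r i * (B' ! i) x) = evec (Suc k) x"
proof -
  have "dsum (evec (Suc k)) (evec (Suc k)) \<in> canon_rel s0 s1 n"
    using assms length_F_eq length_FG_eq s1_le_n by (auto simp: canon_rel_def dsum_def evec_def)
  then obtain c where
    "\<And>y. dsum (evec (Suc k)) (evec (Suc k)) (Inl y) = (\<Sum>i<n. c i * (if a \<le> i then (B ! i) y else 0))"
    "\<And>y. dsum (evec (Suc k)) (evec (Suc k)) (Inr y) = (\<Sum>i<n. c i * (if i < a + b then (B' ! i) y else 0))"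
    by (rule lspan_gens_coords) blast
  then have l: "\<And>y. evec (Suc k) y = (\<Sum>i<n. c i * (if a \<le> i then (B ! i) y else 0))"
    and r: "\<And>y. evec (Suc k) y = (\<Sum>i<n. c i * (if i < a + b then (B' ! i) y else 0))"
    by (simp_all add: dsum_def)
  let ?r = "\<lambda>i. if a \<le> i \<and> i < n then c i else 0"
  show ?thesis
  proof
    show "(\<lambda>x. \<Sum>i<n. ?r i * (B ! i) x) = evec (Suc k)"
      unfolding l by (intro ext sum.cong) auto
  next
    fix x assume x: "x \<notin> {1..a}"
    have "(B' ! i) x = 0" if "i < a" for i
      using F_support[OF that] x length_F_eq by blast
    then have "(\<Sum>i<a + b. ?r i * (B' ! i) x) = (\<Sum>i<n. c i * (if i < a + b then (B' ! i) x else 0))"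
      using length_B by (subst sum.mono_neutral_cong_left[of "{..<n}" "{..<a + b}"]) auto
    then show "(\<Sum>i<a + b. ?r i * (B' ! i) x) = evec (Suc k) x"
      using r by simp
  qed auto
qed

lemma initial_rows_exist:
  assumes "a \<le> m" "m \<le> a + b"
  obtains C where "rows_B C = map evec [1..<m+1]"
    "\<And>k i. k < m \<Longrightarrow> i \<notin> row_support k \<Longrightarrow> C k i = 0"
    "\<And>k x. a \<le> k \<Longrightarrow> k < m \<Longrightarrow> x \<notin> {1..a} \<Longrightarrow> (rows_B' C ! k) x = evec (Suc k) x"
proof -
  define good where "good k r \<longleftrightarrow> (\<forall>i. i \<notin> row_support k \<longrightarrow> r i = 0) \<and>
      (\<lambda>x. \<Sum>i<n. r i * (B ! i) x) = evec (Suc k) \<and>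
      (a \<le> k \<longrightarrow> (\<forall>x. x \<notin> {1..a} \<longrightarrow> (\<Sum>i<a + b. r i * (B' ! i) x) = evec (Suc k) x))" for k r
  have "\<exists>r. good k r" if "k < m" for k
  proof (cases "k < a")
    case True
    then obtain r where "\<And>i. n \<le> i \<Longrightarrow> r i = 0" "(\<lambda>x. \<Sum>i<n. r i * (B ! i) x) = evec (Suc k)"
      by (rule low_row_coords) blast
    then have "good k r"
      using True by (auto simp: good_def row_support_def)
    then show ?thesis
      by blast
  next
    case False
    then have "a \<le> k" "Suc k \<le> a + b"
      using that assms by auto
    then obtain r where "\<And>i. i \<notin> {a..<n} \<Longrightarrow> r i = 0" "(\<lambda>x. \<Sum>i<n. r i * (B ! i) x) = evec (Suc k)"
      "\<And>x. x \<notin> {1..a} \<Longrightarrow> (\<Sum>i<a + b. r i * (B' ! i) x) = evec (Suc k) x"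
      by (rule mid_row_coords) blast
    then have "good k r"
      using False by (auto simp: good_def row_support_def)
    then show ?thesis
      by blast
  qed
  then obtain C where C: "\<And>k. k < m \<Longrightarrow> good k (C k)"
    by (metis bchoice lessThan_iff)
  show ?thesis
  proof
    show "rows_B C = map evec [1..<m+1]"
      using C by (intro nth_equalityI) (auto simp: coord_rows_def good_def simp del: upt_Suc)
    show "C k i = 0" if "k < m" "i \<notin> row_support k" for k i
      using C that by (auto simp: good_def)
    show "(rows_B' C ! k) x = evec (Suc k) x" if "a \<le> k" "k < m" "x \<notin> {1..a}" for k x
      using C that by (auto simp: good_def nth_rows_B' row_bound_def)
  qed
qed

lemma lin_indep_low_rows_B':
  assumes "a \<le> m" and rows: "\<And>k. k < a \<Longrightarrow> rows_B C ! k = evec (Suc k)"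
  shows "lin_indep (take a (rows_B' C))"
  unfolding lin_indep_def
proof (intro allI impI)
  fix lam :: "nat \<Rightarrow> complex" and k0
  assume "\<forall>x. (\<Sum>k<length (take a (rows_B' C)). lam k * (take a (rows_B' C) ! k) x) = 0"
    and "k0 < length (take a (rows_B' C))"
  moreover have len: "length (take a (rows_B' C)) = a"
    using assms(1) by simp
  moreover have "(\<Sum>k<a. lam k * (take a (rows_B' C) ! k) x) = (\<Sum>k<a. lam k * (rows_B' C ! k) x)" for x
    by (intro sum.cong) auto
  ultimately have comb: "\<And>x. (\<Sum>k<a. lam k * (rows_B' C ! k) x) = 0" and k0: "k0 < a"
    by simp_all
  define mu where "mu i = (\<Sum>k<a. lam k * C k i)" for i
  have "(\<Sum>i<a. mu i * (B' ! i) x) = 0" for x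
  proof -
    have "(\<Sum>i<a. mu i * (B' ! i) x) = (\<Sum>k<a. \<Sum>i<a. lam k * C k i * (B' ! i) x)"
      unfolding mu_def by (subst sum.swap) (simp add: sum_distrib_right)
    also have "\<dots> = (\<Sum>k<a. lam k * (rows_B' C ! k) x)"
      using assms(1) by (simp add: nth_rows_B' row_bound_def sum_distrib_left mult.assoc)
    finally show ?thesis
      using comb by simp
  qed
  then have mu_low: "mu i = 0" if "i < a" for i
    using lin_indep_coeff_zero[OF lin_indep_B', where S="{..<a}" and c=mu and i=i] that length_f
    by auto
  have "lam k0 = (\<Sum>k<a. lam k * evec (Suc k) (Suc k0))"
    using k0 by (subst sum.remove[of _ k0]) (auto simp: evec_def intro!: sum.neutral)
  also have "\<dots> = (\<Sum>k<a. \<Sum>i<n. lam k * C k i * (B ! i) (Suc k0))"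
  proof (intro sum.cong refl)
    fix k assume "k \<in> {..<a}"
    then have "evec (Suc k) = (\<lambda>x. \<Sum>i<n. C k i * (B ! i) x)"
      using rows[of k] assms(1) by (simp add: coord_rows_def)
    then show "lam k * evec (Suc k) (Suc k0) = (\<Sum>i<n. lam k * C k i * (B ! i) (Suc k0))"
      by (simp add: sum_distrib_left mult.assoc)
  qed
  also have "\<dots> = (\<Sum>i<n. mu i * (B ! i) (Suc k0))"
    unfolding mu_def by (subst sum.swap) (simp add: sum_distrib_right)
  also have "\<dots> = 0"
  proof (intro sum.neutral ballI)
    fix i assume "i \<in> {..<n}"
    then show "mu i * (B ! i) (Suc k0) = 0"
      using mu_low GH_support[of i "Suc k0"] k0 length_F_eq by (cases "i < a") auto
  qed
  finally show "lam k0 = 0" .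
qed

lemma wedge_rows_B'_block:
  assumes "a \<le> m"
    and high: "\<And>k x. a \<le> k \<Longrightarrow> k < m \<Longrightarrow> x \<notin> {1..a} \<Longrightarrow> (rows_B' C ! k) x = evec (Suc k) x"
  shows "wedge (rows_B' C) J = (if J = {1..m} then wedge (take a (rows_B' C)) {1..a} else 0)"
proof -
  have "wedge (rows_B' C) J =
      (if J = {1..length (rows_B' C)} then wedge (take a (rows_B' C)) {1..a} else 0)"
  proof (rule wedge_block_unitriangular)
    show "a \<le> length (rows_B' C)"
      using assms by simp
  next
    fix k x assume "k < a" "(rows_B' C ! k) x \<noteq> 0"
    then show "x \<in> {1..a}"
      using rows_B'_low_support[of k C x] assms(1) by simp
  next
    fix k x assume "a \<le> k" "k < length (rows_B' C)" "x \<noteq> Suc k" "(rows_B' C ! k) x \<noteq> 0"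
    then show "x \<in> {1..a}"
      using high[of k x] by (auto simp: evec_def)
  next
    fix k assume "a \<le> k" "k < length (rows_B' C)"
    then show "(rows_B' C ! k) (Suc k) = 1"
      using high[of k "Suc k"] by (simp add: evec_def)
  qed
  then show ?thesis
    by simp
qed

lemma wedge_low_rows_B'_nonzero:
  assumes "a \<le> m" "\<And>k. k < a \<Longrightarrow> rows_B C ! k = evec (Suc k)"
  shows "wedge (take a (rows_B' C)) {1..a} \<noteq> 0"
proof -
  have "x \<in> {1..a}" if u: "u \<in> set (take a (rows_B' C))" and x: "u x \<noteq> 0" for u x
  proof -
    obtain k where "k < a" "u = rows_B' C ! k"
      using u assms(1) by (auto simp: in_set_conv_nth)
    then show ?thesis
      using rows_B'_low_support[of k C x] x assms(1) by simp
  qed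
  moreover have "length (take a (rows_B' C)) = a"
    using assms(1) by simp
  ultimately show ?thesis
    using wedge_nonzero_if_lin_indep[OF lin_indep_low_rows_B'[OF assms]] by simp
qed

lemma L_initial_column:
  assumes "a \<le> m" "m \<le> a + b"
  obtains d where "d \<noteq> 0" "\<And>J. L J {1..m} = (if J = {1..m} then d else 0)"
proof -
  obtain C where rows: "rows_B C = map evec [1..<m+1]"
    and supp: "\<And>k i. k < m \<Longrightarrow> i \<notin> row_support k \<Longrightarrow> C k i = 0"
    and high: "\<And>k x. a \<le> k \<Longrightarrow> k < m \<Longrightarrow> x \<notin> {1..a} \<Longrightarrow> (rows_B' C ! k) x = evec (Suc k) x"
    using initial_rows_exist[OF assms] by blast
  have msub: "{1..m} \<in> msub n m"
    using assms length_FG_eq s1_le_n by (simp add: msub_def)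
  have "L J {1..m} = mat_apply n m L (wedge (rows_B C)) J" for J
    using mat_apply_wedge_evec[OF msub] rows
    by (simp add: atLeastLessThanSuc_atLeastAtMost[symmetric] del: upt_Suc)
  also have "\<dots> J = wedge (rows_B' C) J" for J
    using L_wedge_rows[OF assms(1) supp] .
  also have "\<dots> J = (if J = {1..m} then wedge (take a (rows_B' C)) {1..a} else 0)" for J
    using wedge_rows_B'_block[OF assms(1) high] .
  moreover have "rows_B C ! k = evec (Suc k)" if "k < a" for k
    using rows that assms(1) by (simp del: upt_Suc)
  then have "wedge (take a (rows_B' C)) {1..a} \<noteq> 0"
    by (rule wedge_low_rows_B'_nonzero[OF assms(1)])
  ultimately show ?thesis
    using that by simp
qed

end

lemma lam_rep_canon_initial_column:
  assumes "s0 \<le> s1" "s1 \<le> n" and rep: "lam_rep n (lspan (map (cvec s0 s1) [1..<n+1])) m L"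
    and "L \<noteq> (\<lambda>_ _. 0)"
  obtains d where "d \<noteq> 0" "\<And>J. L J {1..m} = (if J = {1..m} then d else 0)"
proof -
  obtain fs gs hs Fs Gs Hs where
    "is_basis n (fs @ gs @ hs)" "is_basis n (Fs @ Gs @ Hs)"
    "length fs = length Fs" "length gs = length Gs" "length hs = length Hs"
    "lspan (map (cvec s0 s1) [1..<n+1]) =
       lspan (map (dsum (\<lambda>_. 0)) Fs @ map2 dsum gs Gs @ map (\<lambda>h. dsum h (\<lambda>_. 0)) hs)"
    "is_op n m L"
    "\<forall>S. S \<subseteq> {..<n} \<and> card S = m \<longrightarrow>
       mat_apply n m L (wedge (map (\<lambda>i. (fs @ gs @ hs) ! i) (sorted_list_of_set S))) =
         (if {..<length fs} \<subseteq> S \<and> S \<subseteq> {..<length fs + length gs}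
          then wedge (map (\<lambda>i. (Fs @ Gs) ! i) (sorted_list_of_set S))
          else (\<lambda>_. 0))"
    using rep unfolding lam_rep_def by (elim exE conjE) (rule that; assumption)
  then interpret canon_lambda_rep n s0 s1 m L fs gs hs Fs Gs Hs
    using assms(1,2) by unfold_locales
  show ?thesis
    using L_vanishes_out_of_range L_initial_column that assms(4) by blast
qed

section \<open>The canonical hinge and the vector Xi\<close>

lemma sum_list_take_mono: "i \<le> j \<Longrightarrow> sum_list (take i (xs :: nat list)) \<le> sum_list (take j xs)"
  by (metis le_add1 le_add_diff_inverse sum_list_append take_add)

lemma canon_hinge_member:
  assumes "P \<in> set (canon_hinge n alpha)" "sum_list alpha = n"
  obtains s0 s1 where "s0 \<le> s1" "s1 \<le> n" "P = lspan (map (cvec s0 s1) [1..<n+1])"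
proof -
  obtain j where "P = lspan (map (cvec (psum alpha (j - 1)) (psum alpha j)) [1..<n+1])"
    using assms(1) unfolding canon_hinge_def by auto
  moreover have "psum alpha (j - 1) \<le> psum alpha j"
    unfolding psum_def by (rule sum_list_take_mono) simp
  moreover have "psum alpha j \<le> sum_list (take (max j (length alpha)) alpha)"
    unfolding psum_def by (rule sum_list_take_mono) simp
  ultimately show ?thesis
    using that assms(2) by simp
qed

lemma lies_over_canon_initial_column:
  assumes "lies_over_nondeg n A (canon_hinge n alpha)" "sum_list alpha = n" "m \<le> n"
  obtains c where "c \<noteq> 0" "\<And>J. A m J {1..m} = (if J = {1..m} then c else 0)"
proof -
  obtain P L c where P: "P \<in> set (canon_hinge n alpha)" and rep: "lam_rep n P m L"
    and "L \<noteq> (\<lambda>_ _. 0)" "c \<noteq> 0" "A m = (\<lambda>J I. c * L J I)"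
    using assms(1,3) unfolding lies_over_nondeg_def by blast
  moreover obtain s0 s1 where "s0 \<le> s1" "s1 \<le> n" "P = lspan (map (cvec s0 s1) [1..<n+1])"
    using canon_hinge_member[OF P assms(2)] .
  ultimately obtain d where "d \<noteq> 0" "\<And>J. L J {1..m} = (if J = {1..m} then d else 0)"
    using lam_rep_canon_initial_column by metis
  then show ?thesis
    using that[of "c * d"] \<open>c \<noteq> 0\<close> \<open>A m = _\<close> by simp
qed

lemma slots_range: "j \<in> set (slots n nu) \<Longrightarrow> j \<in> {1..n}"
  by (auto simp: slots_def)

lemma finite_tidx: "finite (tidx n nu)"
proof (rule finite_subset)
  show "tidx n nu \<subseteq> {Is. set Is \<subseteq> Pow {1..n} \<and> length Is = length (slots n nu)}"
    by (fastforce simp: tidx_def msub_def in_set_conv_nth)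
qed (simp add: finite_lists_length_eq)

lemma rnu_Xi:
  assumes "\<And>j J. j \<in> {1..n} \<Longrightarrow> M j J {1..j} = c j * (if J = {1..j} then 1 else 0)"
  shows "rnu n nu M (Xi n nu) = (\<lambda>Is. (\<Prod>i<length (slots n nu). c (slots n nu ! i)) * Xi n nu Is)"
proof
  fix Js
  let ?sl = "slots n nu"
  let ?I0 = "map (\<lambda>j. {1..j}) ?sl"
  have range: "?sl ! i \<in> {1..n}" if "i < length ?sl" for i
    using slots_range that nth_mem by blast
  have I0: "?I0 \<in> tidx n nu"
    using range by (auto simp: tidx_def msub_def)
  show "rnu n nu M (Xi n nu) Js = (\<Prod>i<length ?sl. c (?sl ! i)) * Xi n nu Js"
  proof (cases "Js \<in> tidx n nu")
    case True
    have "rnu n nu M (Xi n nu) Js = (\<Prod>i<length ?sl. M (?sl ! i) (Js ! i) (?I0 ! i))"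
      using True I0 finite_tidx by (simp add: rnu_def Xi_def if_distrib sum.delta cong: if_cong)
    also have "\<dots> = (\<Prod>i<length ?sl. c (?sl ! i) * (if Js ! i = ?I0 ! i then 1 else 0))"
      using assms range by (intro prod.cong) auto
    also have "\<dots> = (\<Prod>i<length ?sl. c (?sl ! i)) * (if \<forall>i<length ?sl. Js ! i = ?I0 ! i then 1 else 0)"
      by (auto simp: prod.distrib intro: prod_zero)
    also have "(\<forall>i<length ?sl. Js ! i = ?I0 ! i) \<longleftrightarrow> Js = ?I0"
      using True by (auto simp: tidx_def intro: nth_equalityI)
    finally show ?thesis
      by (simp add: Xi_def)
  qed (use I0 in \<open>auto simp: rnu_def Xi_def\<close>)
qed

definition id_mat :: "nat \<Rightarrow> nat \<Rightarrow> nat \<Rightarrow> complex" where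
  "id_mat n r i = (if r = i \<and> r \<in> {1..n} then 1 else 0)"

lemma gl_id_mat: "gl n (id_mat n)"
proof -
  have delta: "(\<Sum>l = 1..n. id_mat n r l * id_mat n l i) = (if r = i then 1 else 0)" if "r \<in> {1..n}" for r i
  proof -
    have "(\<Sum>l = 1..n. id_mat n r l * id_mat n l i) = (\<Sum>l = 1..n. if l = r then id_mat n r i else 0)"
      by (intro sum.cong) (auto simp: id_mat_def)
    also have "\<dots> = id_mat n r i"
      using that by (simp add: sum.delta)
    finally show ?thesis
      using that by (simp add: id_mat_def)
  qed
  have "id_mat n r i \<noteq> 0 \<Longrightarrow> r \<in> {1..n} \<and> i \<in> {1..n}" for r i
    by (simp add: id_mat_def split: if_splits)
  then show ?thesis
    unfolding gl_def using delta by blast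
qed

lemma cha_id_mat:
  assumes "j \<in> {1..n}"
  shows "cha n (id_mat n) j J {1..j} = 1 * (if J = {1..j} then 1 else 0)"
proof -
  have initial: "{1..j} \<in> msub n j"
    using assms by (simp add: msub_def)
  have eq: "map (\<lambda>i r. id_mat n r i) (sorted_list_of_set {1..j}) = map evec (sorted_list_of_set {1..j})"
  proof (rule map_cong[OF refl])
    fix i assume "i \<in> set (sorted_list_of_set {1..j})"
    then have "i \<in> {1..n}"
      using assms by simp
    then show "(\<lambda>r. id_mat n r i) = evec i"
      by (auto simp: id_mat_def evec_def)
  qed
  show ?thesis
  proof (cases "J \<in> msub n j")
    case True
    then have "cha n (id_mat n) j J {1..j} = wedge (map (\<lambda>i r. id_mat n r i) (sorted_list_of_set {1..j})) J"
      using initial by (simp add: cha_def)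
    also have "\<dots> = (if J = {1..j} then 1 else 0)"
      unfolding eq by (rule wedge_evec) simp
    finally show ?thesis
      by simp
  next
    case False
    then show ?thesis
      using initial by (auto simp: cha_def)
  qed
qed

lemma Xi_in_Hnu: "Xi n nu \<in> Hnu n nu"
proof -
  have "rnu n nu (cha n (id_mat n)) (Xi n nu) = (\<lambda>Is. (\<Prod>i<length (slots n nu). 1) * Xi n nu Is)"
    by (rule rnu_Xi) (rule cha_id_mat)
  then have "Xi n nu = rnu n nu (cha n (id_mat n)) (Xi n nu)"
    by simp
  then have "Xi n nu \<in> {rnu n nu (cha n g) (Xi n nu) | g. gl n g}"
    using gl_id_mat by blast
  then show ?thesis
    unfolding Hnu_def cspan_def
    by (intro CollectI exI[of _ "{Xi n nu}"] exI[of _ "\<lambda>_. 1"]) simp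
qed

theorem lemma2p14:
  fixes n :: nat and alpha :: "nat list" and nu :: "nat \<Rightarrow> nat"
    and A :: "nat \<Rightarrow> nat set \<Rightarrow> nat set \<Rightarrow> complex"
  assumes "\<forall>a\<in>set alpha. 0 < a"
    and "sum_list alpha = n"
    and "\<forall>j\<in>{1..<n}. nu (Suc j) \<le> nu j"
    and "lies_over_nondeg n A (canon_hinge n alpha)"
  shows "\<exists>c::complex. c \<noteq> 0 \<and> rho n nu A (Xi n nu) = (\<lambda>Is. c * Xi n nu Is)"
proof -
  have "\<forall>j\<in>{1..n}. \<exists>c. c \<noteq> 0 \<and> (\<forall>J. A j J {1..j} = c * (if J = {1..j} then 1 else 0))"
  proof
    fix j assume "j \<in> {1..n}"
    then obtain c where "c \<noteq> 0" "\<And>J. A j J {1..j} = (if J = {1..j} then c else 0)"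
      using lies_over_canon_initial_column[OF assms(4,2)] by auto
    then show "\<exists>c. c \<noteq> 0 \<and> (\<forall>J. A j J {1..j} = c * (if J = {1..j} then 1 else 0))"
      by auto
  qed
  then obtain c where c: "\<forall>j\<in>{1..n}. c j \<noteq> 0 \<and> (\<forall>J. A j J {1..j} = c j * (if J = {1..j} then 1 else 0))"
    by (rule bchoice[THEN exE])
  have "rho n nu A (Xi n nu) = rnu n nu A (Xi n nu)"
    using Xi_in_Hnu by (simp add: rho_def)
  also have "\<dots> = (\<lambda>Is. (\<Prod>i<length (slots n nu). c (slots n nu ! i)) * Xi n nu Is)"
    using c by (intro rnu_Xi) blast
  finally have "rho n nu A (Xi n nu) = (\<lambda>Is. (\<Prod>i<length (slots n nu). c (slots n nu ! i)) * Xi n nu Is)" .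
  moreover have "(\<Prod>i<length (slots n nu). c (slots n nu ! i)) \<noteq> 0"
    using c slots_range nth_mem by fastforce
  ultimately show ?thesis
    by blast
qed

end
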